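(* Assume the wavelets are compactly supported. Let $s\ge0$, $p\in[1,+\infty)$, let $d'\in(0,d)$ and let $(K,t,N,a,(\Theta_n),\mu)$ be adapted Cantor data of dimension at least $d'$. For every $\alpha\in(\max(0,d-sp),d')$ and every $G\subset K$ with $\overline{\dim}_B(G)<\alpha$, there exists $f\in B^{s,1}_p(\mathbb R^d)$ with $\|f\|\le1$ such that: (1) for all $x\in K$, $(P_jf(x))_j$ converges; (2) for all $x\in K$ and all $j\in\mathbb N$, $R_jf(x)\ge0$; (3) for all $x\in G$, $\liminf_j\frac{\log|R_jf(x)|}{j\log2}\ge\frac{d-sp-\alpha}p$.
   Context: Standing setup. $(V_j)_{j\in\mathbb Z}$ is an orthogonal multiresolution analysis of $L^2(\mathbb R^d)$ with scaling function $\varphi$, and $\psi^{(1)},\dots,\psi^{(2^d-1)}$ associated wavelets (the functions $2^{dj/2}\psi^{(i)}(2^j\cdot-k)$ form an orthonormal basis of $L^2(\mathbb R^d)$), smooth (at least $\lfloor s\rfloor+1$ derivatives). For $j\ge0$, $k\in\mathbb Z^d$, the dyadic cube $(j,k)=\prod_m[k_m2^{-j},(k_m+1)2^{-j})$, $\Lambda_j$ the set of such cubes, $\psi^{(i)}_{(j,k)}(x)=\psi^{(i)}(2^jx-k)$; for a closed dyadic cube $\mu=\prod_m[k_m2^{-j},(k_m+1)2^{-j}]$ write $\psi^{(1)}_\mu=\psi^{(1)}(2^j\cdot-k)$. For $f$: $C_k=\int\overline{\varphi(x-k)}f$, $c^{(i)}_\lambda=2^{dj}\int\overline{\psi^{(i)}_\lambda}f$,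 $Q_lf=\sum_i\sum_{\lambda\in\Lambda_l}c^{(i)}_\lambda\psi^{(i)}_\lambda$, $P_jf=\sum_kC_k\varphi(\cdot-k)+\sum_{0\le l<j}Q_lf$, and when $(P_jf(x))_j$ converges, $R_jf(x)=\sum_{l\ge j}Q_lf(x)$. $B^{s,q}_p(\mathbb R^d)$: $f$ with $(C_k)\in\ell^p$ and $(\varepsilon_j)\in\ell^q$, $\varepsilon_j=2^{(s-d/p)j}(\sum_i\sum_{\lambda\in\Lambda_j}|c^{(i)}_\lambda|^p)^{1/p}$, norm $\|(C_k)\|_{\ell^p}+\|(\varepsilon_j)\|_{\ell^q}$. $\overline{\dim}_B$ is upper box dimension; $\log0=-\infty$. Adapted Cantor data of dimension at least $d'$: a compact self-similar set $K\subset\mathbb R^d$ satisfying the open set condition with $\dim_{\mathcal H}K=\dim_{\mathcal P}K\ge d'$, integers $t,N\ge1$, a nonzero real $a$, finite families $\Theta_n$ ($n\ge0$) of closed dyadic cubes of side $2^{-(t+Nn)}$ and injective maps $\mu$ from $\Theta_n$ to closed dyadic cubes of side $2^{-Nn}$, such that $K_n=\bigcup_{\lambda\in\Theta_n}\lambda$ is decreasing, $K=\bigcap_nK_n$, and for all $n$, $x\in K_n$, $\lambda\in\Theta_n$: $a\psi^{(1)}_{\mu(\lambda)}(x)\ge1$ if $x\in\lambda$ and $\psi^{(1)}_{\mu(\lambda)}(x)=0$ otherwise. *)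

theory Defs
  imports "HOL-Analysis.Analysis"
begin

definition vec_of_int :: "int^'n \<Rightarrow> real^'n" where
  "vec_of_int k = (\<chi> m. real_of_int (k$m))"

definition dil :: "(real^'n \<Rightarrow> real) \<Rightarrow> int \<Rightarrow> int^'n \<Rightarrow> real^'n \<Rightarrow> real" where
  "dil g j k x = g ((2 powr real_of_int j) *\<^sub>R x - vec_of_int k)"

definition sq_int :: "(real^'n \<Rightarrow> real) \<Rightarrow> bool" where
  "sq_int f \<longleftrightarrow> f \<in> borel_measurable lebesgue \<and> integrable lebesgue (\<lambda>x. (f x)\<^sup>2)"

definition Lp_fun :: "real \<Rightarrow> (real^'n \<Rightarrow> real) \<Rightarrow> bool" where
  "Lp_fun p f \<longleftrightarrow> f \<in> borel_measurable lebesgue \<and> integrable lebesgue (\<lambda>x. \<bar>f x\<bar> powr p)"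

definition in_closed_span :: "(real^'n \<Rightarrow> real) set \<Rightarrow> (real^'n \<Rightarrow> real) \<Rightarrow> bool" where
  "in_closed_span S f \<longleftrightarrow> sq_int f \<and>
     (\<forall>\<epsilon>>0. \<exists>F c. finite F \<and> F \<subseteq> S \<and>
        (\<integral>x. (f x - (\<Sum>g\<in>F. c g * g x))\<^sup>2 \<partial>lebesgue) < \<epsilon>)"

definition orthonormal_on :: "'i set \<Rightarrow> ('i \<Rightarrow> real^'n \<Rightarrow> real) \<Rightarrow> bool" where
  "orthonormal_on I e \<longleftrightarrow> (\<forall>i\<in>I. sq_int (e i)) \<and>
     (\<forall>i\<in>I. \<forall>j\<in>I. (\<integral>x. e i x * e j x \<partial>lebesgue) = (if i = j then 1 else 0))"

definition onb_L2 :: "'i set \<Rightarrow> ('i \<Rightarrow> real^'n \<Rightarrow> real) \<Rightarrow> bool" where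
  "onb_L2 I e \<longleftrightarrow> orthonormal_on I e \<and>
     (\<forall>f. sq_int f \<and> (\<forall>i\<in>I. (\<integral>x. f x * e i x \<partial>lebesgue) = 0) \<longrightarrow>
          (AE x in lebesgue. f x = 0))"

definition MRA_space :: "(real^'n \<Rightarrow> real) \<Rightarrow> int \<Rightarrow> (real^'n \<Rightarrow> real) set" where
  "MRA_space \<phi> j = {f. in_closed_span (range (\<lambda>k. dil \<phi> j k)) f}"

definition orthogonal_MRA :: "(real^'n \<Rightarrow> real) \<Rightarrow> bool" where
  "orthogonal_MRA \<phi> \<longleftrightarrow>
     orthonormal_on UNIV (\<lambda>k. dil \<phi> 0 k) \<and>
     (\<forall>j. MRA_space \<phi> j \<subseteq> MRA_space \<phi> (j + 1)) \<and>
     (\<forall>f. (\<forall>j. f \<in> MRA_space \<phi> j) \<longrightarrow> (AE x in lebesgue. f x = 0)) \<and>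
     (\<forall>f. sq_int f \<longrightarrow> (\<forall>\<epsilon>>0. \<exists>j g. g \<in> MRA_space \<phi> j \<and>
          (\<integral>x. (f x - g x)\<^sup>2 \<partial>lebesgue) < \<epsilon>))"

definition wav_idx :: "'n::finite itself \<Rightarrow> nat set" where
  "wav_idx _ = {1..2 ^ CARD('n) - 1}"

definition associated_wavelets :: "(real^'n \<Rightarrow> real) \<Rightarrow> (nat \<Rightarrow> real^'n \<Rightarrow> real) \<Rightarrow> bool" where
  "associated_wavelets \<phi> \<psi> \<longleftrightarrow>
     (\<forall>i\<in>wav_idx TYPE('n). \<psi> i \<in> MRA_space \<phi> 1 \<and>
        (\<forall>g\<in>MRA_space \<phi> 0. (\<integral>x. \<psi> i x * g x \<partial>lebesgue) = 0)) \<and>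
     onb_L2 (wav_idx TYPE('n) \<times> (UNIV :: int set) \<times> (UNIV :: (int^'n) set))
        (\<lambda>(i, j, k) x. 2 powr (real CARD('n) * real_of_int j / 2) * dil (\<psi> i) j k x)"

fun Ck :: "nat \<Rightarrow> (real^'n \<Rightarrow> real) \<Rightarrow> bool" where
  "Ck 0 f = continuous_on UNIV f"
| "Ck (Suc r) f = (f differentiable_on UNIV \<and>
      (\<forall>m. Ck r (\<lambda>x. frechet_derivative f (at x) (axis m 1))))"

definition compactly_supported :: "(real^'n \<Rightarrow> real) \<Rightarrow> bool" where
  "compactly_supported g \<longleftrightarrow> (\<exists>R. \<forall>x. norm x > R \<longrightarrow> g x = 0)"

definition wavelet_setup :: "real \<Rightarrow> (real^'n \<Rightarrow> real) \<Rightarrow> (nat \<Rightarrow> real^'n \<Rightarrow> real) \<Rightarrow> bool" where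
  "wavelet_setup s \<phi> \<psi> \<longleftrightarrow> orthogonal_MRA \<phi> \<and> associated_wavelets \<phi> \<psi> \<and>
     Ck (nat \<lfloor>s\<rfloor> + 1) \<phi> \<and> (\<forall>i\<in>wav_idx TYPE('n). Ck (nat \<lfloor>s\<rfloor> + 1) (\<psi> i))"

definition scoef :: "(real^'n \<Rightarrow> real) \<Rightarrow> (real^'n \<Rightarrow> real) \<Rightarrow> int^'n \<Rightarrow> real" where
  "scoef \<phi> f k = (\<integral>x. \<phi> (x - vec_of_int k) * f x \<partial>lebesgue)"

definition wcoef :: "(nat \<Rightarrow> real^'n \<Rightarrow> real) \<Rightarrow> (real^'n \<Rightarrow> real) \<Rightarrow> nat \<Rightarrow> nat \<Rightarrow> int^'n \<Rightarrow> real" where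
  "wcoef \<psi> f i j k = 2 powr (real CARD('n) * real j) *
      (\<integral>x. dil (\<psi> i) (int j) k x * f x \<partial>lebesgue)"

definition Qop :: "(nat \<Rightarrow> real^'n \<Rightarrow> real) \<Rightarrow> (real^'n \<Rightarrow> real) \<Rightarrow> nat \<Rightarrow> real^'n \<Rightarrow> real" where
  "Qop \<psi> f l x = (\<Sum>i\<in>wav_idx TYPE('n). \<Sum>\<^sub>\<infinity>k. wcoef \<psi> f i l k * dil (\<psi> i) (int l) k x)"

definition Pop :: "(real^'n \<Rightarrow> real) \<Rightarrow> (nat \<Rightarrow> real^'n \<Rightarrow> real) \<Rightarrow> (real^'n \<Rightarrow> real) \<Rightarrow> nat \<Rightarrow> real^'n \<Rightarrow> real" where
  "Pop \<phi> \<psi> f j x = (\<Sum>\<^sub>\<infinity>k. scoef \<phi> f k * \<phi> (x - vec_of_int k)) + (\<Sum>l<j. Qop \<psi> f l x)"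

definition Rop :: "(nat \<Rightarrow> real^'n \<Rightarrow> real) \<Rightarrow> (real^'n \<Rightarrow> real) \<Rightarrow> nat \<Rightarrow> real^'n \<Rightarrow> real" where
  "Rop \<psi> f j x = (\<Sum>l. Qop \<psi> f (l + j) x)"

definition besov_eps :: "(nat \<Rightarrow> real^'n \<Rightarrow> real) \<Rightarrow> real \<Rightarrow> real \<Rightarrow> (real^'n \<Rightarrow> real) \<Rightarrow> nat \<Rightarrow> real" where
  "besov_eps \<psi> s p f j = 2 powr ((s - real CARD('n) / p) * real j) *
     (\<Sum>i\<in>wav_idx TYPE('n). \<Sum>\<^sub>\<infinity>k. \<bar>wcoef \<psi> f i j k\<bar> powr p) powr (1 / p)"

text \<open>f in B^{s,q}_p (here f is taken in L^p, so that the coefficients are defined).\<close>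
definition besov :: "(real^'n \<Rightarrow> real) \<Rightarrow> (nat \<Rightarrow> real^'n \<Rightarrow> real) \<Rightarrow> real \<Rightarrow> real \<Rightarrow> real \<Rightarrow> (real^'n \<Rightarrow> real) \<Rightarrow> bool" where
  "besov \<phi> \<psi> s p q f \<longleftrightarrow> Lp_fun p f \<and>
     (\<lambda>k. \<bar>scoef \<phi> f k\<bar> powr p) summable_on UNIV \<and>
     (\<forall>i\<in>wav_idx TYPE('n). \<forall>j. (\<lambda>k. \<bar>wcoef \<psi> f i j k\<bar> powr p) summable_on UNIV) \<and>
     summable (\<lambda>j. besov_eps \<psi> s p f j powr q)"

definition besov_norm :: "(real^'n \<Rightarrow> real) \<Rightarrow> (nat \<Rightarrow> real^'n \<Rightarrow> real) \<Rightarrow> real \<Rightarrow> real \<Rightarrow> real \<Rightarrow> (real^'n \<Rightarrow> real) \<Rightarrow> real" where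
  "besov_norm \<phi> \<psi> s p q f =
     (\<Sum>\<^sub>\<infinity>k. \<bar>scoef \<phi> f k\<bar> powr p) powr (1 / p) +
     (\<Sum>j. besov_eps \<psi> s p f j powr q) powr (1 / q)"

definition cover_number :: "real \<Rightarrow> 'a::metric_space set \<Rightarrow> nat" where
  "cover_number \<delta> E = Inf {card C | C. finite C \<and> E \<subseteq> \<Union>C \<and>
       (\<forall>A\<in>C. bounded A \<and> diameter A \<le> \<delta>)}"

definition upper_box_dim :: "'a::metric_space set \<Rightarrow> ereal" where
  "upper_box_dim E = (if bounded E then
     Limsup (at_right 0) (\<lambda>\<delta>. if cover_number \<delta> E = 0 then -\<infinity>
        else ereal (ln (real (cover_number \<delta> E)) / (- ln \<delta>)))
   else \<infinity>)"

definition hausdorff_content :: "real \<Rightarrow> real \<Rightarrow> 'a::metric_space set \<Rightarrow> ennreal" where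
  "hausdorff_content \<delta> s E = (INF U \<in> {U :: nat \<Rightarrow> 'a set. E \<subseteq> (\<Union>n. U n) \<and>
       (\<forall>n. bounded (U n) \<and> diameter (U n) \<le> \<delta>)}. \<Sum>n. ennreal (diameter (U n) powr s))"

definition hausdorff_measure :: "real \<Rightarrow> 'a::metric_space set \<Rightarrow> ennreal" where
  "hausdorff_measure s E = (SUP \<delta> \<in> {0<..}. hausdorff_content \<delta> s E)"

definition hausdorff_dim :: "'a::metric_space set \<Rightarrow> real" where
  "hausdorff_dim E = Inf {s. s > 0 \<and> hausdorff_measure s E = 0}"

definition packing_pre :: "real \<Rightarrow> real \<Rightarrow> 'a::metric_space set \<Rightarrow> ennreal" where
  "packing_pre \<delta> s E = (SUP (I, x, r) \<in> {(I :: nat set, x :: nat \<Rightarrow> 'a, r :: nat \<Rightarrow> real).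
        (\<forall>i\<in>I. x i \<in> E \<and> 0 < r i \<and> r i \<le> \<delta>) \<and>
        (\<forall>i\<in>I. \<forall>j\<in>I. i \<noteq> j \<longrightarrow> cball (x i) (r i) \<inter> cball (x j) (r j) = {})}.
      \<Sum>i. (if i \<in> I then ennreal ((2 * r i) powr s) else 0))"

definition packing_premeasure :: "real \<Rightarrow> 'a::metric_space set \<Rightarrow> ennreal" where
  "packing_premeasure s E = (INF \<delta> \<in> {0<..}. packing_pre \<delta> s E)"

definition packing_measure :: "real \<Rightarrow> 'a::metric_space set \<Rightarrow> ennreal" where
  "packing_measure s E = (INF U \<in> {U :: nat \<Rightarrow> 'a set. E \<subseteq> (\<Union>n. U n)}.
       \<Sum>n. packing_premeasure s (U n))"

definition packing_dim :: "'a::metric_space set \<Rightarrow> real" where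
  "packing_dim E = Inf {s. s > 0 \<and> packing_measure s E = 0}"

definition similitude :: "('a::metric_space \<Rightarrow> 'a) \<Rightarrow> real \<Rightarrow> bool" where
  "similitude S r \<longleftrightarrow> (\<forall>x y. dist (S x) (S y) = r * dist x y)"

definition self_similar_OSC :: "'a::metric_space set \<Rightarrow> bool" where
  "self_similar_OSC K \<longleftrightarrow> compact K \<and> K \<noteq> {} \<and>
     (\<exists>m::nat. \<exists>S r. m \<ge> 1 \<and>
        (\<forall>i<m. 0 < r i \<and> r i < 1 \<and> similitude (S i) (r i)) \<and>
        K = (\<Union>i<m. S i ` K) \<and>
        (\<exists>V. open V \<and> V \<noteq> {} \<and> bounded V \<and> (\<forall>i<m. S i ` V \<subseteq> V) \<and>
           (\<forall>i<m. \<forall>j<m. i \<noteq> j \<longrightarrow> S i ` V \<inter> S j ` V = {})))"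

definition closed_cube :: "nat \<Rightarrow> int^'n \<Rightarrow> (real^'n) set" where
  "closed_cube j k = {x. \<forall>m. real_of_int (k$m) * 2 powr (- real j) \<le> x$m \<and>
                              x$m \<le> (real_of_int (k$m) + 1) * 2 powr (- real j)}"

definition Kn :: "nat \<Rightarrow> nat \<Rightarrow> (nat \<Rightarrow> (int^'n) set) \<Rightarrow> nat \<Rightarrow> (real^'n) set" where
  "Kn t N \<Theta> n = (\<Union>k\<in>\<Theta> n. closed_cube (t + N * n) k)"

text \<open>A closed dyadic cube of side 2^-j
  is represented by its integer corner k (the cube closed_cube j k);
  Theta n is the set of corners of the cubes of side 2^-(t+Nn), and mu n maps it
  injectively to corners of cubes of side 2^-(Nn); psi^(1)_mu = psi 1 (2^(Nn) . - mu).\<close>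
definition adapted_cantor_data ::
  "(nat \<Rightarrow> real^'n \<Rightarrow> real) \<Rightarrow> real \<Rightarrow> (real^'n) set \<Rightarrow> nat \<Rightarrow> nat \<Rightarrow> real \<Rightarrow>
     (nat \<Rightarrow> (int^'n) set) \<Rightarrow> (nat \<Rightarrow> int^'n \<Rightarrow> int^'n) \<Rightarrow> bool" where
  "adapted_cantor_data \<psi> d' K t N a \<Theta> \<mu> \<longleftrightarrow>
     self_similar_OSC K \<and> hausdorff_dim K = packing_dim K \<and> hausdorff_dim K \<ge> d' \<and>
     t \<ge> 1 \<and> N \<ge> 1 \<and> a \<noteq> 0 \<and>
     (\<forall>n. finite (\<Theta> n)) \<and> (\<forall>n. inj_on (\<mu> n) (\<Theta> n)) \<and>
     (\<forall>n. Kn t N \<Theta> (Suc n) \<subseteq> Kn t N \<Theta> n) \<and>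
     K = (\<Inter>n. Kn t N \<Theta> n) \<and>
     (\<forall>n. \<forall>x\<in>Kn t N \<Theta> n. \<forall>Q\<in>\<Theta> n.
        (x \<in> closed_cube (t + N * n) Q \<longrightarrow> a * dil (\<psi> 1) (int (N * n)) (\<mu> n Q) x \<ge> 1) \<and>
        (x \<notin> closed_cube (t + N * n) Q \<longrightarrow> dil (\<psi> 1) (int (N * n)) (\<mu> n Q) x = 0))"

end

theory Submission
  imports Defs "HOL-Real_Asymp.Real_Asymp"
begin

text \<open>
  Fix \<open>\<beta>\<close> strictly between the upper box dimension of \<open>G\<close> and \<open>\<alpha>\<close>, and let
  \<open>\<gamma> = (s p + \<alpha> - d) / p > 0\<close>. The function is the lacunary wavelet series
  \<open>f = \<epsilon> \<Sum>_n a 2^(-\<gamma> N n) \<Sum>_\<lambda> \<psi>^(1)_\<mu>(\<lambda>)\<close>, where \<open>\<lambda>\<close> runs over the cubes of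
  \<open>\<Theta>_n\<close> that meet \<open>G\<close>. By orthonormality its wavelet coefficients are exactly these
  weights and only finitely many scaling coefficients are nonzero, so its Besov norm is finite
  once \<open>\<Sum>_n 2^((s - d/p) N n) c_n^(1/p) 2^(-\<gamma> N n)\<close> converges, \<open>c_n\<close> being the number of
  these cubes. At most \<open>C 2^(\<beta> N n)\<close> dyadic cubes of generation \<open>t + N n\<close> meet \<open>G\<close>, so
  \<open>\<beta> < \<alpha>\<close> makes this series geometric, and \<open>\<epsilon>\<close> normalises the norm to at most one.
  On \<open>K\<close> the adapted data make every wavelet of the series nonnegative after the factor \<open>a\<close>,
  so all tails \<open>R_j f\<close> are nonnegative; at \<open>x \<in> G\<close> the block of generation
  \<open>n = j div N + 1\<close> alone contributes at least \<open>\<epsilon> 2^(-\<gamma> N n)\<close> to \<open>R_j f(x)\<close>, which gives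
  the rate \<open>-\<gamma>\<close>.
\<close>

section \<open>Lattice points and dyadic cubes\<close>

definition lattice_box :: "real^'n \<Rightarrow> real \<Rightarrow> (int^'n) set" where
  "lattice_box c r = {k. \<forall>m. \<bar>c$m - real_of_int (k$m)\<bar> \<le> r}"

lemma
  fixes c :: "real^'n"
  assumes "0 \<le> r"
  shows finite_lattice_box: "finite (lattice_box c r)"
    and card_lattice_box_le: "card (lattice_box c r) \<le> (nat \<lceil>2*r\<rceil> + 1) ^ CARD('n)"
proof -
  define L where "L = nat \<lceil>2*r\<rceil>"
  define I where "I m = {\<lceil>c$m - r\<rceil> .. \<lceil>c$m - r\<rceil> + int L}" for m
  have sub: "lattice_box c r \<subseteq> (\<lambda>g. \<chi> m. g m) ` PiE UNIV I"
  proof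
    fix k assume k: "k \<in> lattice_box c r"
    have "(\<lambda>m. k$m) \<in> PiE UNIV I"
    proof (auto simp: PiE_def Pi_def I_def)
      fix m
      have h: "\<bar>c$m - real_of_int (k$m)\<bar> \<le> r" using k by (auto simp: lattice_box_def)
      show "\<lceil>c$m - r\<rceil> \<le> k$m" using h by (simp add: ceiling_le_iff abs_le_iff)
      have "real_of_int (k$m) \<le> real_of_int \<lceil>c$m - r\<rceil> + 2*r"
        using h le_of_int_ceiling[of "c$m - r"] by (simp add: abs_le_iff) linarith
      also have "\<dots> \<le> real_of_int \<lceil>c$m - r\<rceil> + real L"
        unfolding L_def using assms by linarith
      finally show "k$m \<le> \<lceil>c$m - r\<rceil> + int L" by linarith
    qed
    then show "k \<in> (\<lambda>g. \<chi> m. g m) ` PiE UNIV I"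
      by (intro image_eqI[where x="\<lambda>m. k$m"]) auto
  qed
  have fin: "finite (PiE UNIV I)" by (intro finite_PiE) (auto simp: I_def)
  show "finite (lattice_box c r)"
    using finite_subset[OF sub finite_imageI[OF fin]] .
  have "card (I m) = L + 1" for m by (simp add: I_def)
  then have "card (PiE UNIV I) = (L+1) ^ CARD('n)" by (simp add: card_PiE)
  moreover have "card (lattice_box c r) \<le> card (PiE UNIV I)"
    using card_mono[OF finite_imageI[OF fin] sub] card_image_le[OF fin, of "\<lambda>g. \<chi> m. g m"]
    by linarith
  ultimately show "card (lattice_box c r) \<le> (nat \<lceil>2*r\<rceil> + 1) ^ CARD('n)"
    by (simp add: L_def)
qed

lemma translate_nonzero_imp_lattice_box:
  fixes h :: "real^'n \<Rightarrow> real"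
  assumes "\<And>x. norm x > R \<Longrightarrow> h x = 0" "h (y - vec_of_int k) \<noteq> 0"
  shows "k \<in> lattice_box y R"
proof (unfold lattice_box_def, intro CollectI allI)
  fix m
  have "norm (y - vec_of_int k) \<le> R" using assms by force
  then show "\<bar>y$m - real_of_int (k$m)\<bar> \<le> R"
    using component_le_norm_cart[of "y - vec_of_int k" m] by (simp add: vec_of_int_def)
qed

lemma
  fixes A :: "(real^'n) set"
  assumes "bounded A" "diameter A \<le> 2 powr (- real j)"
  shows finite_cubes_meeting_small_set: "finite {k. closed_cube j k \<inter> A \<noteq> {}}"
    and card_cubes_meeting_small_set_le: "card {k. closed_cube j k \<inter> A \<noteq> {}} \<le> 4 ^ CARD('n)"
proof -
  define \<delta> where "\<delta> = (2::real) powr (- real j)"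
  have \<delta>0: "\<delta> > 0" by (simp add: \<delta>_def)
  define T where "T = {k::int^'n. closed_cube j k \<inter> A \<noteq> {}}"
  have "finite T \<and> card T \<le> 4 ^ CARD('n)"
  proof (cases "A = {}")
    case True then show ?thesis by (simp add: T_def)
  next
    case False
    then obtain y where y: "y \<in> A" by blast
    define S where "S = lattice_box (\<chi> m. y$m / \<delta> - 1/2) (3/2)"
    have "T \<subseteq> S"
    proof
      fix k assume "k \<in> T"
      then obtain x where x: "x \<in> closed_cube j k" "x \<in> A" by (auto simp: T_def)
      show "k \<in> S" unfolding S_def lattice_box_def
      proof (intro CollectI allI)
        fix m
        have "\<bar>x$m - y$m\<bar> \<le> dist x y"
          using component_le_norm_cart[of "x - y" m] by (simp add: dist_norm)
        also have "\<dots> \<le> \<delta>"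
          using diameter_bounded_bound[OF assms(1) x(2) y] assms(2) by (simp add: \<delta>_def)
        finally have "\<bar>x$m - y$m\<bar> \<le> \<delta>" .
        moreover have "real_of_int (k$m) * \<delta> \<le> x$m" "x$m \<le> (real_of_int (k$m) + 1) * \<delta>"
          using x(1) by (auto simp: closed_cube_def \<delta>_def)
        ultimately have "real_of_int (k$m) * \<delta> \<le> y$m + \<delta>" "y$m - \<delta> \<le> (real_of_int (k$m) + 1) * \<delta>"
          by linarith+
        then have "real_of_int (k$m) \<le> y$m / \<delta> + 1" "y$m / \<delta> - 2 \<le> real_of_int (k$m)"
          using \<delta>0 by (simp_all add: field_simps)
        then show "\<bar>(\<chi> m. y$m / \<delta> - 1/2)$m - real_of_int (k$m)\<bar> \<le> 3/2"
          by (simp only: vec_lambda_beta abs_le_iff) linarith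
      qed
    qed
    moreover have "finite S" "card S \<le> 4 ^ CARD('n)"
      using finite_lattice_box[of "3/2"] card_lattice_box_le[of "3/2"] by (simp_all add: S_def)
    ultimately show ?thesis using card_mono finite_subset order_trans by metis
  qed
  then show "finite {k. closed_cube j k \<inter> A \<noteq> {}}"
    and "card {k. closed_cube j k \<inter> A \<noteq> {}} \<le> 4 ^ CARD('n)" by (simp_all add: T_def)
qed

section \<open>Covering numbers and upper box dimension\<close>

lemma cover_number_attained:
  fixes G :: "'a::euclidean_space set"
  assumes "bounded G" "0 < \<delta>"
  obtains C where "finite C" "card C = cover_number \<delta> G" "G \<subseteq> \<Union>C"
    "\<And>A. A \<in> C \<Longrightarrow> bounded A \<and> diameter A \<le> \<delta>"
proof -
  define Cs where "Cs = {card C |C. finite C \<and> G \<subseteq> \<Union>C \<and> (\<forall>A\<in>C. bounded A \<and> diameter A \<le> \<delta>)}"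
  have "compact (closure G)" using assms(1) by (simp add: compact_closure)
  then have "\<forall>e>0. \<exists>k. finite k \<and> k \<subseteq> closure G \<and> closure G \<subseteq> (\<Union>x\<in>k. ball x e)"
    by (rule seq_compact_imp_totally_bounded[OF compact_imp_seq_compact])
  from this[rule_format, of "\<delta> / 2"] assms(2) obtain k
    where k: "finite k" "closure G \<subseteq> (\<Union>x\<in>k. ball x (\<delta> / 2))" by auto
  define C0 where "C0 = (\<lambda>x. cball x (\<delta> / 2)) ` k"
  have "G \<subseteq> \<Union>C0"
  proof
    fix x assume "x \<in> G"
    then obtain z where "z \<in> k" "x \<in> ball z (\<delta> / 2)" using k(2) closure_subset by blast
    then show "x \<in> \<Union>C0" unfolding C0_def using ball_subset_cball by blast
  qed
  moreover have "\<forall>A\<in>C0. bounded A \<and> diameter A \<le> \<delta>" using assms(2) by (auto simp: C0_def)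
  moreover have "finite C0" using k(1) by (simp add: C0_def)
  ultimately have "card C0 \<in> Cs" unfolding Cs_def by blast
  then have "Cs \<noteq> {}" by blast
  then have "cover_number \<delta> G \<in> Cs"
    unfolding cover_number_def Cs_def[symmetric] by (rule Inf_nat_def1)
  then obtain C where "cover_number \<delta> G = card C" "finite C" "G \<subseteq> \<Union>C"
    "\<forall>A\<in>C. bounded A \<and> diameter A \<le> \<delta>" unfolding Cs_def by blast
  then show ?thesis using that by auto
qed

lemma
  fixes G :: "(real^'n) set"
  assumes "bounded G"
  shows finite_cubes_meeting: "finite {k. closed_cube j k \<inter> G \<noteq> {}}"
    and card_cubes_meeting_le_cover_number:
      "card {k. closed_cube j k \<inter> G \<noteq> {}} \<le> 4 ^ CARD('n) * cover_number (2 powr - real j) G"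
proof -
  obtain C where C: "finite C" "card C = cover_number (2 powr - real j) G" "G \<subseteq> \<Union>C"
    "\<And>A. A \<in> C \<Longrightarrow> bounded A \<and> diameter A \<le> 2 powr - real j"
    using cover_number_attained[OF assms, of "2 powr - real j"] by auto
  define T where "T A = {k. closed_cube j k \<inter> A \<noteq> {}}" for A :: "(real^'n) set"
  have sub: "{k. closed_cube j k \<inter> G \<noteq> {}} \<subseteq> (\<Union>A\<in>C. T A)"
    using C(3) by (auto simp: T_def)
  have T: "finite (T A)" "card (T A) \<le> 4 ^ CARD('n)" if "A \<in> C" for A
    using finite_cubes_meeting_small_set card_cubes_meeting_small_set_le C(4)[OF that]
    unfolding T_def by auto
  have fin: "finite (\<Union>A\<in>C. T A)" using C(1) T(1) by blast
  then show "finite {k. closed_cube j k \<inter> G \<noteq> {}}" using finite_subset[OF sub] by blast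
  have "card {k. closed_cube j k \<inter> G \<noteq> {}} \<le> (\<Sum>A\<in>C. card (T A))"
    using card_mono[OF fin sub] card_UN_le[OF C(1), of T] by linarith
  also have "\<dots> \<le> card C * 4 ^ CARD('n)"
    using sum_bounded_above[of C "\<lambda>A. card (T A)"] T(2) by simp
  finally show "card {k. closed_cube j k \<inter> G \<noteq> {}}
      \<le> 4 ^ CARD('n) * cover_number (2 powr - real j) G"
    by (simp add: C(2) mult.commute)
qed

lemma eventually_cover_number_le_powr:
  fixes G :: "'a::metric_space set"
  assumes "bounded G" "upper_box_dim G < ereal \<beta>"
  shows "eventually (\<lambda>j. real (cover_number (2 powr - real j) G) \<le> 2 powr (\<beta> * real j))
    sequentially"
proof -
  define F where "F \<delta> = (if cover_number \<delta> G = 0 then -\<infinity>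
        else ereal (ln (real (cover_number \<delta> G)) / (- ln \<delta>)))" for \<delta> :: real
  have "Limsup (at_right 0) F < ereal \<beta>" using assms unfolding upper_box_dim_def F_def by simp
  then have "eventually (\<lambda>\<delta>. F \<delta> < ereal \<beta>) (at_right 0)" using Limsup_lessD by blast
  moreover have "filterlim (\<lambda>j::nat. 2 powr - real j) (at_right (0::real)) sequentially"
    by real_asymp
  ultimately have "eventually (\<lambda>j. F (2 powr - real j) < ereal \<beta>) sequentially"
    unfolding filterlim_iff by blast
  then show ?thesis using eventually_ge_at_top[of "1::nat"]
  proof eventually_elim
    case (elim j)
    show ?case
    proof (cases "cover_number (2 powr - real j) G = 0")
      case False
      with elim have "ln (real (cover_number (2 powr - real j) G)) < \<beta> * (real j * ln 2)"
        by (simp add: F_def ln_powr divide_less_eq)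
      have "real (cover_number (2 powr - real j) G)
          = exp (ln (real (cover_number (2 powr - real j) G)))"
        using False by simp
      also have "\<dots> < exp (\<beta> * real j * ln 2)" using \<open>ln _ < _\<close> by (simp add: mult.assoc)
      also have "exp (\<beta> * real j * ln 2) = 2 powr (\<beta> * real j)" by (simp add: powr_def)
      finally have "real (cover_number (2 powr - real j) G) < 2 powr (\<beta> * real j)" .
      then show ?thesis by simp
    qed simp
  qed
qed

lemma eventually_le_imp_le_const_mult:
  fixes f g :: "nat \<Rightarrow> real"
  assumes "eventually (\<lambda>j. f j \<le> g j) sequentially" "\<And>j. 0 < g j"
  shows "\<exists>C>0. \<forall>j. f j \<le> C * g j"
proof -
  obtain j0 where j0: "\<And>j. j \<ge> j0 \<Longrightarrow> f j \<le> g j"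
    using assms(1) unfolding eventually_sequentially by blast
  define C where "C = 1 + (\<Sum>i<j0. \<bar>f i\<bar> / g i)"
  have S: "0 \<le> (\<Sum>i<j0. \<bar>f i\<bar> / g i)" using assms(2) by (intro sum_nonneg) (simp add: less_imp_le)
  have "f j \<le> C * g j" for j
  proof (cases "j < j0")
    case True
    have "\<bar>f j\<bar> / g j \<le> (\<Sum>i<j0. \<bar>f i\<bar> / g i)"
      using True assms(2) by (intro member_le_sum) (auto simp: less_imp_le)
    then have "\<bar>f j\<bar> / g j \<le> C" by (simp add: C_def)
    then show ?thesis using assms(2)[of j] by (simp add: divide_le_eq)
  next
    case False
    have "g j \<le> C * g j" using S assms(2)[of j] by (simp add: C_def distrib_right)
    then show ?thesis using j0[of j] False by simp
  qed
  moreover have "C > 0" using S by (simp add: C_def)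
  ultimately show ?thesis by blast
qed

lemma card_cubes_meeting_le_powr:
  fixes G :: "(real^'n) set"
  assumes "bounded G" "upper_box_dim G < ereal \<beta>"
  shows "\<exists>C>0. \<forall>j. real (card {k. closed_cube j k \<inter> G \<noteq> {}}) \<le> C * 2 powr (\<beta> * real j)"
proof -
  have ev: "eventually (\<lambda>j. real (card {k. closed_cube j k \<inter> G \<noteq> {}})
    \<le> 4 ^ CARD('n) * 2 powr (\<beta> * real j)) sequentially"
    using eventually_cover_number_le_powr[OF assms]
  proof eventually_elim
    case (elim j)
    have "real (card {k. closed_cube j k \<inter> G \<noteq> {}})
        \<le> 4 ^ CARD('n) * real (cover_number (2 powr - real j) G)"
      using of_nat_mono[OF card_cubes_meeting_le_cover_number[OF assms(1), of j]] by simp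
    also have "\<dots> \<le> 4 ^ CARD('n) * 2 powr (\<beta> * real j)" using elim by simp
    finally show ?case .
  qed
  have "\<And>j. 0 < (4::real) ^ CARD('n) * 2 powr (\<beta> * real j)" by simp
  from eventually_le_imp_le_const_mult[OF ev this] obtain C where
    "C > 0" "\<forall>j. real (card {k. closed_cube j k \<inter> G \<noteq> {}})
      \<le> C * (4 ^ CARD('n) * 2 powr (\<beta> * real j))"
    by blast
  then show ?thesis by (intro exI[of _ "C * 4 ^ CARD('n)"]) (simp add: mult.assoc)
qed

section \<open>Dilated wavelets\<close>

lemma continuous_on_UNIV_borel_measurable_lebesgue:
  fixes f :: "'a::euclidean_space \<Rightarrow> 'b::euclidean_space"
  shows "continuous_on UNIV f \<Longrightarrow> f \<in> borel_measurable lebesgue"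
  by (metis measurable_lborel2 borel_measurable_continuous_onI measurable_completion)

lemma integrable_bounded_support:
  fixes g :: "'a::euclidean_space \<Rightarrow> real"
  assumes "g \<in> borel_measurable lebesgue" "\<And>x. \<bar>g x\<bar> \<le> M" "\<And>x. g x \<noteq> 0 \<Longrightarrow> norm x \<le> R"
  shows "integrable lebesgue g"
proof -
  have "cball (0::'a) R \<in> sets lebesgue" "emeasure lebesgue (cball (0::'a) R) < \<infinity>"
    using lmeasurable_cball[of "0::'a" R] by (auto simp: fmeasurable_def)
  then have "integrable lebesgue (\<lambda>x. M * indicator (cball (0::'a) R) x)" by auto
  moreover have "AE x in lebesgue. norm (g x) \<le> norm (M * indicator (cball 0 R) x)"
  proof (intro AE_I2)
    fix x
    show "norm (g x) \<le> norm (M * indicator (cball 0 R) x)"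
      using assms(2,3)[of x] by (cases "g x = 0") (auto simp: indicator_def)
  qed
  ultimately show ?thesis by (rule Bochner_Integration.integrable_bound[OF _ assms(1)])
qed

lemma continuous_compactly_supported_bounded:
  fixes g :: "real^'n \<Rightarrow> real"
  assumes "continuous_on UNIV g" "compactly_supported g"
  obtains M where "\<And>x. \<bar>g x\<bar> \<le> M"
proof -
  obtain R where R: "\<And>x. norm x > R \<Longrightarrow> g x = 0"
    using assms(2) unfolding compactly_supported_def by blast
  have "compact (g ` cball 0 R)"
    by (rule compact_continuous_image) (auto intro: continuous_on_subset[OF assms(1)])
  then obtain B where B: "\<forall>y\<in>g ` cball 0 R. norm y \<le> B"
    using compact_imp_bounded bounded_iff by blast
  have "\<bar>g x\<bar> \<le> max B 0" for x
  proof (cases "norm x > R")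
    case False
    then have "x \<in> cball 0 R" by simp
    then show ?thesis using B by (metis image_eqI max.coboundedI1 real_norm_def)
  qed (simp add: R)
  then show ?thesis using that by blast
qed

lemma continuous_on_dil: "continuous_on UNIV g \<Longrightarrow> continuous_on UNIV (dil g j k)"
  unfolding dil_def
  by (rule continuous_on_compose2[of UNIV g]) (auto intro!: continuous_intros)

lemma dil_nonzero_imp_norm_scaled_le:
  assumes "\<And>x. norm x > R \<Longrightarrow> g x = 0" "dil g (int j) k x \<noteq> 0"
  shows "norm ((2 ^ j) *\<^sub>R x - vec_of_int k) \<le> R"
  using assms unfolding dil_def by (force simp: powr_realpow)

lemma dil_nonzero_imp_norm_le:
  assumes "\<And>x. norm x > R \<Longrightarrow> g x = 0" "dil g (int j) k x \<noteq> 0"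
  shows "norm x \<le> R + norm (vec_of_int k)"
proof -
  have "norm x \<le> norm ((2 ^ j) *\<^sub>R x :: real^'a)" by (simp add: mult_le_cancel_right1)
  also have "\<dots> \<le> R + norm (vec_of_int k)"
    using dil_nonzero_imp_norm_scaled_le[where R=R and g=g, OF assms]
      norm_triangle_sub[of "(2 ^ j) *\<^sub>R x" "vec_of_int k"]
    by linarith
  finally show ?thesis .
qed

lemma dil_nonzero_imp_dist_le:
  assumes "\<And>x. norm x > R \<Longrightarrow> g x = 0" "dil g (int j) k x \<noteq> 0" "dil g (int j) k z \<noteq> 0"
  shows "dist x z \<le> 2 * R"
proof -
  have "dist x z \<le> 2 ^ j * dist x z" by (simp add: mult_le_cancel_right1)
  also have "\<dots> = norm (((2 ^ j) *\<^sub>R x - vec_of_int k) - ((2 ^ j) *\<^sub>R z - vec_of_int k))"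
    by (simp add: dist_norm scaleR_diff_right[symmetric])
  also have "\<dots> \<le> 2 * R"
    using norm_triangle_ineq4[of "(2 ^ j) *\<^sub>R x - vec_of_int k" "(2 ^ j) *\<^sub>R z - vec_of_int k"]
      dil_nonzero_imp_norm_scaled_le[where R=R and g=g, OF assms(1,2)]
      dil_nonzero_imp_norm_scaled_le[where R=R and g=g, OF assms(1,3)] by linarith
  finally show ?thesis .
qed

lemma integrable_dil_mult:
  fixes g u :: "real^'n \<Rightarrow> real"
  assumes "continuous_on UNIV g" "compactly_supported g"
    and "u \<in> borel_measurable lebesgue" "\<And>x. \<bar>u x\<bar> \<le> M"
  shows "integrable lebesgue (\<lambda>x. dil g (int j) k x * u x)"
proof -
  obtain R where R: "\<And>x. norm x > R \<Longrightarrow> g x = 0"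
    using assms(2) unfolding compactly_supported_def by blast
  obtain Mg where Mg: "\<And>x. \<bar>g x\<bar> \<le> Mg"
    using continuous_compactly_supported_bounded[OF assms(1,2)] by blast
  show ?thesis
  proof (rule integrable_bounded_support)
    show "(\<lambda>x. dil g (int j) k x * u x) \<in> borel_measurable lebesgue"
      using continuous_on_UNIV_borel_measurable_lebesgue[OF continuous_on_dil[OF assms(1)]] assms(3)
      by measurable
    show "\<bar>dil g (int j) k x * u x\<bar> \<le> Mg * M" for x
      unfolding abs_mult dil_def using Mg assms(4)
      by (intro mult_mono) (auto intro: order_trans[OF abs_ge_zero])
    show "dil g (int j) k x * u x \<noteq> 0 \<Longrightarrow> norm x \<le> R + norm (vec_of_int k)" for x
      using dil_nonzero_imp_norm_le[where R=R and g=g, OF R] by force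
  qed
qed

lemma one_in_wav_idx: "1 \<in> wav_idx TYPE('n::finite)"
proof -
  have "(2::nat) ^ 1 \<le> 2 ^ CARD('n)" by (rule power_increasing) auto
  then show ?thesis by (auto simp: wav_idx_def)
qed

lemma integral_dil_wavelets:
  fixes \<psi> :: "nat \<Rightarrow> real^'n::finite \<Rightarrow> real"
  assumes "associated_wavelets \<phi> \<psi>" "i \<in> wav_idx TYPE('n)" "i' \<in> wav_idx TYPE('n)"
  shows "(\<integral>x. dil (\<psi> i) j k x * dil (\<psi> i') j' k' x \<partial>lebesgue)
     = (if i = i' \<and> j = j' \<and> k = k' then 2 powr (- real CARD('n) * real_of_int j) else 0)"
proof -
  define c where "c j = 2 powr (real CARD('n) * real_of_int j / 2)" for j :: int
  have "orthonormal_on (wav_idx TYPE('n) \<times> (UNIV :: int set) \<times> (UNIV :: (int^'n) set))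
        (\<lambda>(i, j, k) x. c j * dil (\<psi> i) j k x)"
    using assms(1) unfolding associated_wavelets_def onb_L2_def c_def by blast
  then have e1: "(\<integral>x. (c j * dil (\<psi> i) j k x) * (c j' * dil (\<psi> i') j' k' x) \<partial>lebesgue)
      = (if (i, j, k) = (i', j', k') then 1 else 0)"
    using assms(2,3) unfolding orthonormal_on_def by fastforce
  have e2: "(\<integral>x. (c j * dil (\<psi> i) j k x) * (c j' * dil (\<psi> i') j' k' x) \<partial>lebesgue)
      = c j * c j' * (\<integral>x. dil (\<psi> i) j k x * dil (\<psi> i') j' k' x \<partial>lebesgue)"
    by (simp add: ac_simps)
  have c0: "c j > 0" "c j' > 0" by (auto simp: c_def)
  show ?thesis
  proof (cases "i = i' \<and> j = j' \<and> k = k'")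
    case True
    have "c j * c j = 2 powr (real CARD('n) * real_of_int j)"
      by (simp add: c_def powr_add[symmetric] mult.commute)
    with True e1 e2 have "2 powr (real CARD('n) * real_of_int j) *
        (\<integral>x. dil (\<psi> i) j k x * dil (\<psi> i') j' k' x \<partial>lebesgue) = 1" by simp
    then show ?thesis using True by (simp add: powr_minus field_simps)
  next
    case False
    with e1 e2 c0 show ?thesis by auto
  qed
qed

lemma scoef_scale: "scoef \<phi> (\<lambda>x. c * f x) k = c * scoef \<phi> f k"
  by (simp add: scoef_def ac_simps)

lemma finite_scoef_support:
  fixes f \<phi> :: "real^'n \<Rightarrow> real"
  assumes "compactly_supported \<phi>" "\<And>x. norm x > R \<Longrightarrow> f x = 0"
  shows "finite {k. scoef \<phi> f k \<noteq> 0}"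
proof -
  obtain R\<phi> where R\<phi>: "\<And>x. norm x > R\<phi> \<Longrightarrow> \<phi> x = 0"
    using assms(1) unfolding compactly_supported_def by blast
  have "{k. scoef \<phi> f k \<noteq> 0} \<subseteq> lattice_box 0 (\<bar>R\<bar> + \<bar>R\<phi>\<bar>)"
  proof (intro subsetI CollectI)
    fix k assume k: "k \<in> {k. scoef \<phi> f k \<noteq> 0}"
    have "\<not> (\<forall>x. \<phi> (x - vec_of_int k) * f x = 0)"
    proof
      assume "\<forall>x. \<phi> (x - vec_of_int k) * f x = 0"
      then have "(\<lambda>x. \<phi> (x - vec_of_int k) * f x) = (\<lambda>x. 0)" by (intro ext) blast
      then have "scoef \<phi> f k = 0" unfolding scoef_def by (simp only:) simp
      with k show False by simp
    qed
    then obtain x where x: "\<phi> (x - vec_of_int k) * f x \<noteq> 0" by blast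
    show "k \<in> lattice_box 0 (\<bar>R\<bar> + \<bar>R\<phi>\<bar>)" unfolding lattice_box_def
    proof (intro CollectI allI)
      fix m
      have "f x \<noteq> 0" "\<phi> (x - vec_of_int k) \<noteq> 0" using x by auto
      then have "norm x \<le> R" "norm (x - vec_of_int k) \<le> R\<phi>"
        using assms(2)[of x] R\<phi>[of "x - vec_of_int k"] by (meson not_le)+
      moreover have "\<bar>x$m\<bar> \<le> norm x" "\<bar>(x - vec_of_int k)$m\<bar> \<le> norm (x - vec_of_int k)"
        by (rule component_le_norm_cart)+
      ultimately show "\<bar>0$m - real_of_int (k$m)\<bar> \<le> \<bar>R\<bar> + \<bar>R\<phi>\<bar>" by (simp add: vec_of_int_def)
    qed
  qed
  then show ?thesis by (rule finite_subset) (simp add: finite_lattice_box)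
qed

section \<open>Geometric rates\<close>

lemma summable_two_powr_neg: "0 < \<gamma> \<Longrightarrow> summable (\<lambda>n::nat. 2 powr (- \<gamma> * real n))"
proof -
  assume "0 < \<gamma>"
  then have "\<bar>2 powr (- \<gamma>)\<bar> < 1" by (simp add: powr_minus_divide)
  then have "summable (\<lambda>n. (2 powr (- \<gamma>)) ^ n)" by (intro summable_geometric) simp
  then show ?thesis by (simp add: powr_realpow[symmetric] powr_powr)
qed

lemma liminf_log_rate_ge:
  fixes r :: "nat \<Rightarrow> real"
  assumes b: "0 < b" and r: "\<And>j. b * 2 powr (- \<gamma> * real j) \<le> r j"
  shows "ereal (- \<gamma>) \<le> liminf (\<lambda>j. if r j = 0 then -\<infinity> else ereal (ln \<bar>r j\<bar> / (real j * ln 2)))"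
proof (unfold le_Liminf_iff, intro allI impI)
  fix y assume y: "y < ereal (- \<gamma>)"
  have r0: "0 < r j" for j using less_le_trans[OF _ r[of j]] b by simp
  have "(\<lambda>j. - \<gamma> + ln b / (real j * ln 2)) \<longlonglongrightarrow> - \<gamma>"
    by real_asymp
  then have "eventually (\<lambda>j. y < ereal (- \<gamma> + ln b / (real j * ln 2))) sequentially"
    using y by (simp add: order_tendstoD(1)[OF tendsto_ereal] del: ereal_less_eq)
  then show "eventually
      (\<lambda>j. y < (if r j = 0 then -\<infinity> else ereal (ln \<bar>r j\<bar> / (real j * ln 2)))) sequentially"
    using eventually_ge_at_top[of "1::nat"]
  proof eventually_elim
    case (elim j)
    have "ln b - \<gamma> * real j * ln 2 \<le> ln (r j)"
      using ln_mono[OF r[of j]] b by (simp add: ln_mult ln_powr)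
    moreover have j: "0 < real j * ln 2" using elim(2) by simp
    ultimately have "(ln b - \<gamma> * real j * ln 2) / (real j * ln 2) \<le> ln (r j) / (real j * ln 2)"
      by (simp add: divide_right_mono)
    moreover have "(ln b - \<gamma> * real j * ln 2) / (real j * ln 2) = - \<gamma> + ln b / (real j * ln 2)"
      using j elim(2) by (simp add: diff_divide_distrib)
    ultimately have "- \<gamma> + ln b / (real j * ln 2) \<le> ln (r j) / (real j * ln 2)" by simp
    then show ?case using elim(1) r0[of j] by (simp add: order.strict_trans2)
  qed
qed

section \<open>Lacunary wavelet series\<close>

locale lacunary_wavelet_series =
  fixes \<phi> :: "real^'n \<Rightarrow> real" and \<psi> :: "nat \<Rightarrow> real^'n \<Rightarrow> real"
    and N :: nat and P :: "nat \<Rightarrow> (int^'n) set" and R :: real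
  assumes wavelets: "associated_wavelets \<phi> \<psi>"
    and continuous_wavelets: "\<And>i. i \<in> wav_idx TYPE('n) \<Longrightarrow> continuous_on UNIV (\<psi> i)"
    and compactly_supported_wavelets: "\<And>i. i \<in> wav_idx TYPE('n) \<Longrightarrow> compactly_supported (\<psi> i)"
    and compactly_supported_scaling: "compactly_supported \<phi>"
    and N_pos: "0 < N"
    and finite_P: "\<And>n. finite (P n)"
    and support_P: "\<And>n k x. k \<in> P n \<Longrightarrow> dil (\<psi> 1) (int (N * n)) k x \<noteq> 0 \<Longrightarrow> norm x \<le> R"
begin

definition wavelet_block :: "nat \<Rightarrow> real^'n \<Rightarrow> real" where
  "wavelet_block n x = (\<Sum>k\<in>P n. dil (\<psi> 1) (int (N * n)) k x)"

definition lacunary_sum :: "(nat \<Rightarrow> real) \<Rightarrow> real^'n \<Rightarrow> real" where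
  "lacunary_sum w x = (\<Sum>n. w n * wavelet_block n x)"

text \<open>At \<open>j = N * n\<close> this is the quantity \<open>\<epsilon>\<^sub>j\<close> of the Besov norm of \<open>lacunary_sum w\<close>;
  at the other levels \<open>\<epsilon>\<^sub>j = 0\<close>.\<close>
definition lacunary_energy :: "real \<Rightarrow> real \<Rightarrow> (nat \<Rightarrow> real) \<Rightarrow> nat \<Rightarrow> real" where
  "lacunary_energy s p w n =
     2 powr ((s - real CARD('n) / p) * real (N * n)) * real (card (P n)) powr (1 / p) * \<bar>w n\<bar>"

lemma continuous_on_wavelet_block: "continuous_on UNIV (wavelet_block n)"
  unfolding wavelet_block_def[abs_def]
  by (intro continuous_on_sum continuous_on_dil continuous_wavelets one_in_wav_idx)

lemma wavelet_block_eq_0: "R < norm x \<Longrightarrow> wavelet_block n x = 0"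
  unfolding wavelet_block_def using support_P by (force intro!: sum.neutral)

text \<open>At a given point only boundedly many translates of the compactly supported \<open>\<psi> 1\<close>
  are nonzero, whatever the set of translations.\<close>
lemma wavelet_block_bounded: "\<exists>B. \<forall>n x. \<bar>wavelet_block n x\<bar> \<le> B"
proof -
  obtain R0 where R0: "\<And>x. norm x > R0 \<Longrightarrow> \<psi> 1 x = 0"
    using compactly_supported_wavelets[OF one_in_wav_idx] unfolding compactly_supported_def by blast
  define R1 where "R1 = max R0 0"
  have R1: "0 \<le> R1" "\<And>x. norm x > R1 \<Longrightarrow> \<psi> 1 x = 0" using R0 by (auto simp: R1_def)
  obtain M where M: "\<And>y. \<bar>\<psi> 1 y\<bar> \<le> M"
    using continuous_compactly_supported_bounded continuous_wavelets compactly_supported_wavelets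
      one_in_wav_idx by metis
  have M0: "0 \<le> M" using M[of 0] by linarith
  define B where "B = real ((nat \<lceil>2 * R1\<rceil> + 1) ^ CARD('n)) * M"
  have "\<bar>wavelet_block n x\<bar> \<le> B" for n x
  proof -
    define y where "y = (2 powr real (N * n)) *\<^sub>R x"
    define S where "S = lattice_box y R1"
    have dil_eq: "dil (\<psi> 1) (int (N * n)) k x = \<psi> 1 (y - vec_of_int k)" for k
      by (simp add: dil_def y_def)
    have "\<bar>wavelet_block n x\<bar> \<le> (\<Sum>k\<in>P n. \<bar>\<psi> 1 (y - vec_of_int k)\<bar>)"
      unfolding wavelet_block_def dil_eq by (rule sum_abs)
    also have "\<dots> = (\<Sum>k\<in>P n \<inter> S. \<bar>\<psi> 1 (y - vec_of_int k)\<bar>)"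
      using translate_nonzero_imp_lattice_box[OF R1(2)] finite_P
      by (intro sum.mono_neutral_right) (auto simp: S_def)
    also have "\<dots> \<le> real (card (P n \<inter> S)) * M"
      using sum_bounded_above[of "P n \<inter> S" "\<lambda>k. \<bar>\<psi> 1 (y - vec_of_int k)\<bar>" M] M by simp
    also have "\<dots> \<le> B"
    proof -
      have "card (P n \<inter> S) \<le> (nat \<lceil>2 * R1\<rceil> + 1) ^ CARD('n)"
        using card_mono[OF finite_lattice_box[OF R1(1)], of "P n \<inter> S" y]
          card_lattice_box_le[OF R1(1), of y]
        unfolding S_def by simp
      then have "real (card (P n \<inter> S)) \<le> real ((nat \<lceil>2 * R1\<rceil> + 1) ^ CARD('n))"
        by (simp only: of_nat_le_iff)
      then show ?thesis unfolding B_def using M0 by (rule mult_right_mono)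
    qed
    finally show ?thesis .
  qed
  then show ?thesis by blast
qed

lemma integral_dil_mult_wavelet_block:
  assumes "i \<in> wav_idx TYPE('n)"
  shows "(\<integral>x. dil (\<psi> i) (int j) k x * wavelet_block n x \<partial>lebesgue)
    = (if i = 1 \<and> j = N * n \<and> k \<in> P n then 2 powr (- real CARD('n) * real j) else 0)"
proof -
  obtain M where M: "\<And>x. \<bar>\<psi> 1 x\<bar> \<le> M"
    using continuous_compactly_supported_bounded continuous_wavelets compactly_supported_wavelets
      one_in_wav_idx by metis
  have int: "integrable lebesgue (\<lambda>x. dil (\<psi> i) (int j) k x * dil (\<psi> 1) (int (N * n)) k' x)" for k'
  proof (rule integrable_dil_mult[where M=M,
        OF continuous_wavelets[OF assms] compactly_supported_wavelets[OF assms]])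
    show "dil (\<psi> 1) (int (N * n)) k' \<in> borel_measurable lebesgue"
      by (intro continuous_on_UNIV_borel_measurable_lebesgue continuous_on_dil continuous_wavelets
          one_in_wav_idx)
    show "\<bar>dil (\<psi> 1) (int (N * n)) k' x\<bar> \<le> M" for x using M by (simp add: dil_def)
  qed
  have "(\<integral>x. dil (\<psi> i) (int j) k x * wavelet_block n x \<partial>lebesgue)
      = (\<Sum>k'\<in>P n. \<integral>x. dil (\<psi> i) (int j) k x * dil (\<psi> 1) (int (N * n)) k' x \<partial>lebesgue)"
    unfolding wavelet_block_def sum_distrib_left using int by simp
  also have "\<dots> = (\<Sum>k'\<in>P n. if i = 1 \<and> j = N * n \<and> k = k'
      then 2 powr (- real CARD('n) * real j) else 0)"
  proof (rule sum.cong[OF refl])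
    fix k' show "(\<integral>x. dil (\<psi> i) (int j) k x * dil (\<psi> 1) (int (N * n)) k' x \<partial>lebesgue)
        = (if i = 1 \<and> j = N * n \<and> k = k' then 2 powr (- real CARD('n) * real j) else 0)"
      using integral_dil_wavelets[OF wavelets assms one_in_wav_idx, of "int j" k "int (N * n)" k']
      by (simp del: of_nat_mult)
  qed
  also have "\<dots> = (if i = 1 \<and> j = N * n \<and> k \<in> P n then 2 powr (- real CARD('n) * real j) else 0)"
    using finite_P by (cases "i = 1 \<and> j = N * n") (auto simp: sum.delta' intro!: sum.neutral)
  finally show ?thesis .
qed

context
  fixes w :: "nat \<Rightarrow> real"
  assumes summable_w: "summable (\<lambda>n. \<bar>w n\<bar>)"
begin

lemma summable_norm_lacunary_terms: "summable (\<lambda>n. norm (w n * wavelet_block n x))"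
proof -
  obtain B where B: "\<And>n x. \<bar>wavelet_block n x\<bar> \<le> B" using wavelet_block_bounded by blast
  show ?thesis
  proof (rule summable_comparison_test'[where N=0, OF summable_mult2[OF summable_w, of B]])
    fix n
    show "norm (norm (w n * wavelet_block n x)) \<le> \<bar>w n\<bar> * B"
      using mult_left_mono[OF B[of n x] abs_ge_zero[of "w n"]] by (simp add: abs_mult)
  qed
qed

lemma lacunary_sum_sums: "(\<lambda>n. w n * wavelet_block n x) sums lacunary_sum w x"
  unfolding lacunary_sum_def
  by (rule summable_sums[OF summable_norm_cancel[OF summable_norm_lacunary_terms]])

lemma lacunary_sum_bounded:
  obtains C where "\<And>x. \<bar>lacunary_sum w x\<bar> \<le> C"
proof -
  obtain B where B: "\<And>n x. \<bar>wavelet_block n x\<bar> \<le> B" using wavelet_block_bounded by blast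
  have "\<bar>lacunary_sum w x\<bar> \<le> (\<Sum>n. \<bar>w n\<bar> * B)" for x
  proof -
    have "\<bar>lacunary_sum w x\<bar> \<le> (\<Sum>n. \<bar>w n * wavelet_block n x\<bar>)"
      unfolding lacunary_sum_def using summable_norm_lacunary_terms by (intro summable_rabs) simp
    also have "\<dots> \<le> (\<Sum>n. \<bar>w n\<bar> * B)"
    proof (rule suminf_le)
      show "\<bar>w n * wavelet_block n x\<bar> \<le> \<bar>w n\<bar> * B" for n
        using mult_left_mono[OF B abs_ge_zero] by (simp add: abs_mult)
      show "summable (\<lambda>n. \<bar>w n * wavelet_block n x\<bar>)" using summable_norm_lacunary_terms by simp
      show "summable (\<lambda>n. \<bar>w n\<bar> * B)" by (rule summable_mult2[OF summable_w])
    qed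
    finally show ?thesis .
  qed
  then show ?thesis using that by blast
qed

lemma lacunary_sum_eq_0: "R < norm x \<Longrightarrow> lacunary_sum w x = 0"
  by (simp add: lacunary_sum_def wavelet_block_eq_0)

lemma borel_measurable_lacunary_sum: "lacunary_sum w \<in> borel_measurable lebesgue"
  unfolding lacunary_sum_def[abs_def]
  using continuous_on_UNIV_borel_measurable_lebesgue[OF continuous_on_wavelet_block] by measurable

lemma Lp_fun_lacunary_sum:
  assumes "0 < p"
  shows "Lp_fun p (lacunary_sum w)"
proof -
  obtain C where C: "\<And>x. \<bar>lacunary_sum w x\<bar> \<le> C" using lacunary_sum_bounded by blast
  show ?thesis unfolding Lp_fun_def
  proof (intro conjI borel_measurable_lacunary_sum integrable_bounded_support)
    show "(\<lambda>x. \<bar>lacunary_sum w x\<bar> powr p) \<in> borel_measurable lebesgue"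
      using borel_measurable_lacunary_sum by measurable
    show "\<bar>\<bar>lacunary_sum w x\<bar> powr p\<bar> \<le> C powr p" for x
      using C[of x] assms by (simp add: powr_mono2)
    show "\<bar>lacunary_sum w x\<bar> powr p \<noteq> 0 \<Longrightarrow> norm x \<le> R" for x
      using lacunary_sum_eq_0 by force
  qed
qed

lemma integral_dil_mult_lacunary_sum:
  assumes i: "i \<in> wav_idx TYPE('n)"
  shows "(\<integral>x. dil (\<psi> i) (int j) k x * lacunary_sum w x \<partial>lebesgue)
    = (if i = 1 \<and> N dvd j \<and> k \<in> P (j div N)
       then w (j div N) * 2 powr (- real CARD('n) * real j) else 0)"
    (is "_ = ?V")
proof -
  define h where "h = dil (\<psi> i) (int j) k"
  define F where "F n x = w n * (h x * wavelet_block n x)" for n x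
  obtain B where B: "\<And>n x. \<bar>wavelet_block n x\<bar> \<le> B" using wavelet_block_bounded by blast
  have int_block: "integrable lebesgue (\<lambda>x. h x * wavelet_block n x)" for n
    unfolding h_def
    by (rule integrable_dil_mult[where M=B,
          OF continuous_wavelets[OF i] compactly_supported_wavelets[OF i]
          continuous_on_UNIV_borel_measurable_lebesgue[OF continuous_on_wavelet_block] B])
  have int_h: "integrable lebesgue (\<lambda>x. \<bar>h x\<bar>)"
    using integrable_dil_mult[where M=1 and u="\<lambda>x. 1", OF continuous_wavelets[OF i]
        compactly_supported_wavelets[OF i]]
    unfolding h_def by simp
  have norm_F: "(\<integral>x. norm (F n x) \<partial>lebesgue) \<le> \<bar>w n\<bar> * (B * (\<integral>x. \<bar>h x\<bar> \<partial>lebesgue))" for n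
  proof -
    have "norm (F n x) \<le> \<bar>w n\<bar> * B * \<bar>h x\<bar>" for x
      using mult_left_mono[OF B[of n x], of "\<bar>w n\<bar> * \<bar>h x\<bar>"] by (simp add: F_def abs_mult mult_ac)
    then have "(\<integral>x. norm (F n x) \<partial>lebesgue) \<le> (\<integral>x. \<bar>w n\<bar> * B * \<bar>h x\<bar> \<partial>lebesgue)"
      using int_block int_h unfolding F_def by (intro integral_mono) auto
    then show ?thesis by (simp add: mult_ac)
  qed
  have "(\<lambda>n. integral\<^sup>L lebesgue (F n)) sums (\<integral>x. (\<Sum>n. F n x) \<partial>lebesgue)"
  proof (rule sums_integral)
    show "integrable lebesgue (F n)" for n unfolding F_def using int_block by simp
    have "summable (\<lambda>n. norm (F n x))" for x
      using summable_mult[OF summable_norm_lacunary_terms, of "\<bar>h x\<bar>" x]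
      by (simp add: F_def abs_mult mult_ac)
    then show "AE x in lebesgue. summable (\<lambda>n. norm (F n x))" by simp
    show "summable (\<lambda>n. \<integral>x. norm (F n x) \<partial>lebesgue)"
      by (rule summable_comparison_test'[OF summable_mult2[OF summable_w], where N=0])
         (use norm_F in simp)
  qed
  moreover have "(\<Sum>n. F n x) = h x * lacunary_sum w x" for x
    unfolding F_def lacunary_sum_def
    using suminf_mult[OF summable_norm_cancel[OF summable_norm_lacunary_terms], of "h x" x]
    by (simp add: mult_ac)
  moreover have "integral\<^sup>L lebesgue (F n) = (if n = j div N then ?V else 0)" for n
  proof -
    have "integral\<^sup>L lebesgue (F n)
        = w n * (if i = 1 \<and> j = N * n \<and> k \<in> P n then 2 powr (- real CARD('n) * real j) else 0)"
      unfolding F_def h_def by (simp add: integral_dil_mult_wavelet_block[OF i])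
    moreover have "(j = N * n) \<longleftrightarrow> (N dvd j \<and> n = j div N)" using N_pos by auto
    ultimately show ?thesis by auto
  qed
  ultimately have "(\<lambda>n. if n = j div N then ?V else 0) sums (\<integral>x. h x * lacunary_sum w x \<partial>lebesgue)"
    by simp
  moreover have "(\<lambda>n. if n = j div N then ?V else 0) sums ?V"
    using sums_single[of "j div N" "\<lambda>_. ?V"] by simp
  ultimately show ?thesis unfolding h_def by (rule sums_unique2)
qed

lemma wcoef_lacunary_sum:
  assumes "i \<in> wav_idx TYPE('n)"
  shows "wcoef \<psi> (lacunary_sum w) i j k
    = (if i = 1 \<and> N dvd j \<and> k \<in> P (j div N) then w (j div N) else 0)"
proof -
  have "2 powr (real CARD('n) * real j) * 2 powr (- real CARD('n) * real j) = 1"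
    by (simp add: powr_add[symmetric])
  then show ?thesis
    unfolding wcoef_def integral_dil_mult_lacunary_sum[OF assms] by (simp add: mult_ac)
qed

lemma Qop_lacunary_sum:
  "Qop \<psi> (lacunary_sum w) l x = (if N dvd l then w (l div N) * wavelet_block (l div N) x else 0)"
proof -
  define n where "n = l div N"
  have "(\<Sum>\<^sub>\<infinity>k. wcoef \<psi> (lacunary_sum w) i l k * dil (\<psi> i) (int l) k x)
      = (if i = 1 \<and> N dvd l then w n * wavelet_block n x else 0)" if i: "i \<in> wav_idx TYPE('n)" for i
  proof (cases "i = 1 \<and> N dvd l")
    case True
    then have i1: "i = 1" and l: "l = N * n" by (auto simp: n_def)
    have wc: "wcoef \<psi> (lacunary_sum w) 1 (N * n) k = (if k \<in> P n then w n else 0)" for k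
      using wcoef_lacunary_sum[OF one_in_wav_idx, of "N * n" k] N_pos by simp
    have "((\<lambda>k. wcoef \<psi> (lacunary_sum w) 1 (N * n) k * dil (\<psi> 1) (int (N * n)) k x) has_sum
        (\<Sum>k\<in>P n. w n * dil (\<psi> 1) (int (N * n)) k x)) UNIV"
      by (rule has_sum_finite_neutralI[OF finite_P[of n]]) (auto simp: wc[simplified])
    then show ?thesis
      using True unfolding i1 l by (simp add: infsumI wavelet_block_def sum_distrib_left)
  next
    case False
    then show ?thesis by (auto simp: wcoef_lacunary_sum[OF i])
  qed
  then have "Qop \<psi> (lacunary_sum w) l x
      = (\<Sum>i\<in>wav_idx TYPE('n).
          if i = 1 then (if N dvd l then w n * wavelet_block n x else 0) else 0)"
    unfolding Qop_def by (intro sum.cong) auto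
  also have "\<dots> = (if N dvd l then w n * wavelet_block n x else 0)"
    using one_in_wav_idx[where 'n='n] by (simp add: sum.delta wav_idx_def)
  finally show ?thesis by (simp add: n_def)
qed

lemma Qop_lacunary_sum_sums: "(\<lambda>l. Qop \<psi> (lacunary_sum w) l x) sums lacunary_sum w x"
proof -
  have mono: "strict_mono (\<lambda>n. N * n)" using N_pos by (auto simp: strict_mono_def)
  have zero: "Qop \<psi> (lacunary_sum w) l x = 0" if "l \<notin> range (\<lambda>n. N * n)" for l
    using that by (auto simp: Qop_lacunary_sum elim!: dvdE)
  have "(\<lambda>n. Qop \<psi> (lacunary_sum w) (N * n) x) = (\<lambda>n. w n * wavelet_block n x)"
    using N_pos by (simp add: Qop_lacunary_sum)
  then have "(\<lambda>n. Qop \<psi> (lacunary_sum w) (N * n) x) sums lacunary_sum w x"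
    using lacunary_sum_sums by simp
  then show ?thesis
    using sums_mono_reindex[where g="\<lambda>n. N * n" and f="\<lambda>l. Qop \<psi> (lacunary_sum w) l x",
        OF mono zero]
    by blast
qed

lemma convergent_Pop_lacunary_sum: "convergent (\<lambda>j. Pop \<phi> \<psi> (lacunary_sum w) j x)"
proof -
  have "(\<lambda>j. \<Sum>l<j. Qop \<psi> (lacunary_sum w) l x) \<longlonglongrightarrow> lacunary_sum w x"
    using Qop_lacunary_sum_sums[of x] by (simp add: sums_def)
  then have "(\<lambda>j. Pop \<phi> \<psi> (lacunary_sum w) j x)
      \<longlonglongrightarrow> (\<Sum>\<^sub>\<infinity>k. scoef \<phi> (lacunary_sum w) k * \<phi> (x - vec_of_int k)) + lacunary_sum w x"
    unfolding Pop_def by (intro tendsto_add tendsto_const)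
  then show ?thesis by (rule convergentI)
qed

lemma summable_Qop_lacunary_sum_tail: "summable (\<lambda>l. Qop \<psi> (lacunary_sum w) (l + j) x)"
  by (rule summable_ignore_initial_segment[OF sums_summable[OF Qop_lacunary_sum_sums]])

context
  fixes x
  assumes nonneg: "\<And>n. 0 \<le> w n * wavelet_block n x"
begin

lemma Qop_lacunary_sum_nonneg: "0 \<le> Qop \<psi> (lacunary_sum w) l x"
  using nonneg by (simp add: Qop_lacunary_sum)

lemma Rop_lacunary_sum_nonneg: "0 \<le> Rop \<psi> (lacunary_sum w) j x"
  unfolding Rop_def
  by (rule suminf_nonneg[OF summable_Qop_lacunary_sum_tail Qop_lacunary_sum_nonneg])

lemma lacunary_term_le_Rop:
  assumes "j \<le> N * n"
  shows "w n * wavelet_block n x \<le> Rop \<psi> (lacunary_sum w) j x"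
proof -
  have "Qop \<psi> (lacunary_sum w) ((N * n - j) + j) x = w n * wavelet_block n x"
    using assms N_pos by (simp add: Qop_lacunary_sum)
  then have "w n * wavelet_block n x = (\<Sum>l\<in>{N * n - j}. Qop \<psi> (lacunary_sum w) (l + j) x)" by simp
  also have "\<dots> \<le> Rop \<psi> (lacunary_sum w) j x"
    unfolding Rop_def
    by (rule sum_le_suminf[OF summable_Qop_lacunary_sum_tail])
       (simp_all add: Qop_lacunary_sum_nonneg)
  finally show ?thesis .
qed

end

lemma has_sum_abs_wcoef_powr:
  assumes "0 < p" "i \<in> wav_idx TYPE('n)"
  shows "((\<lambda>k. \<bar>wcoef \<psi> (lacunary_sum w) i j k\<bar> powr p) has_sum
    (if i = 1 \<and> N dvd j then real (card (P (j div N))) * \<bar>w (j div N)\<bar> powr p else 0)) UNIV"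
  using assms(1) finite_P[of "j div N"]
  by (intro has_sum_finite_neutralI[where B="P (j div N)"])
     (auto simp: wcoef_lacunary_sum[OF assms(2)])

lemma besov_eps_lacunary_sum:
  assumes "0 < p"
  shows "besov_eps \<psi> s p (lacunary_sum w) j
    = (if N dvd j then lacunary_energy s p w (j div N) else 0)"
proof -
  define n where "n = j div N"
  have "(\<Sum>i\<in>wav_idx TYPE('n). \<Sum>\<^sub>\<infinity>k. \<bar>wcoef \<psi> (lacunary_sum w) i j k\<bar> powr p)
      = (\<Sum>i\<in>wav_idx TYPE('n).
          if i = 1 then (if N dvd j then real (card (P n)) * \<bar>w n\<bar> powr p else 0) else 0)"
    using infsumI[OF has_sum_abs_wcoef_powr[OF assms]] by (intro sum.cong) (auto simp: n_def)
  also have "\<dots> = (if N dvd j then real (card (P n)) * \<bar>w n\<bar> powr p else 0)"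
    using one_in_wav_idx[where 'n='n] by (simp add: sum.delta wav_idx_def)
  finally have sum_eq: "(\<Sum>i\<in>wav_idx TYPE('n). \<Sum>\<^sub>\<infinity>k. \<bar>wcoef \<psi> (lacunary_sum w) i j k\<bar> powr p)
      = (if N dvd j then real (card (P n)) * \<bar>w n\<bar> powr p else 0)" .
  show ?thesis
  proof (cases "N dvd j")
    case True
    then have jn: "j = N * n" by (simp add: n_def)
    have "besov_eps \<psi> s p (lacunary_sum w) j
        = 2 powr ((s - real CARD('n) / p) * real j) * (real (card (P n)) powr (1 / p) * \<bar>w n\<bar>)"
      unfolding besov_eps_def sum_eq using True assms by (simp add: powr_mult powr_powr)
    also have "\<dots> = lacunary_energy s p w n" unfolding lacunary_energy_def jn by (simp add: mult_ac)
    finally show ?thesis using True unfolding n_def by simp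
  qed (simp add: besov_eps_def sum_eq)
qed

context
  fixes s p :: real
  assumes p: "1 \<le> p" and summable_energy: "summable (lacunary_energy s p w)"
begin

lemma besov_eps_lacunary_sum_sums:
  "(\<lambda>j. besov_eps \<psi> s p (lacunary_sum w) j) sums (\<Sum>n. lacunary_energy s p w n)"
proof -
  have p0: "0 < p" using p by simp
  have mono: "strict_mono (\<lambda>n. N * n)" using N_pos by (auto simp: strict_mono_def)
  have zero: "besov_eps \<psi> s p (lacunary_sum w) j = 0" if "j \<notin> range (\<lambda>n. N * n)" for j
  proof -
    have "\<not> N dvd j" using that by (auto elim: dvdE)
    then show ?thesis by (simp add: besov_eps_lacunary_sum[OF p0])
  qed
  have "(\<lambda>n. besov_eps \<psi> s p (lacunary_sum w) (N * n)) = lacunary_energy s p w"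
    using N_pos by (simp add: besov_eps_lacunary_sum[OF p0])
  then have "(\<lambda>n. besov_eps \<psi> s p (lacunary_sum w) (N * n)) sums (\<Sum>n. lacunary_energy s p w n)"
    using summable_sums[OF summable_energy] by simp
  then show ?thesis
    using sums_mono_reindex[where g="\<lambda>n. N * n" and f="\<lambda>j. besov_eps \<psi> s p (lacunary_sum w) j",
        OF mono zero]
    by blast
qed

lemma besov_lacunary_sum:
  "besov \<phi> \<psi> s p 1 (lacunary_sum w)"
  "besov_norm \<phi> \<psi> s p 1 (lacunary_sum w) =
     (\<Sum>\<^sub>\<infinity>k. \<bar>scoef \<phi> (lacunary_sum w) k\<bar> powr p) powr (1 / p) + (\<Sum>n. lacunary_energy s p w n)"
proof -
  have eps_nonneg: "0 \<le> besov_eps \<psi> s p (lacunary_sum w) j" for j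
    by (simp add: besov_eps_def)
  have "finite {k. scoef \<phi> (lacunary_sum w) k \<noteq> 0}"
    by (rule finite_scoef_support[OF compactly_supported_scaling lacunary_sum_eq_0])
  then have "((\<lambda>k. \<bar>scoef \<phi> (lacunary_sum w) k\<bar> powr p) has_sum
      (\<Sum>k | scoef \<phi> (lacunary_sum w) k \<noteq> 0. \<bar>scoef \<phi> (lacunary_sum w) k\<bar> powr p)) UNIV"
    by (rule has_sum_finite_neutralI) auto
  then have "(\<lambda>k. \<bar>scoef \<phi> (lacunary_sum w) k\<bar> powr p) summable_on UNIV"
    by (rule has_sum_imp_summable)
  moreover have "(\<lambda>k. \<bar>wcoef \<psi> (lacunary_sum w) i j k\<bar> powr p) summable_on UNIV"
    if "i \<in> wav_idx TYPE('n)" for i j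
    using p by (intro has_sum_imp_summable[OF has_sum_abs_wcoef_powr[OF _ that]]) simp
  moreover have "(\<lambda>j. besov_eps \<psi> s p (lacunary_sum w) j powr 1) = besov_eps \<psi> s p (lacunary_sum w)"
    using eps_nonneg by (simp add: abs_of_nonneg)
  ultimately show "besov \<phi> \<psi> s p 1 (lacunary_sum w)"
    unfolding besov_def using Lp_fun_lacunary_sum p sums_summable[OF besov_eps_lacunary_sum_sums]
    by auto
  have "0 \<le> (\<Sum>n. lacunary_energy s p w n)"
    by (rule suminf_nonneg[OF summable_energy]) (simp add: lacunary_energy_def)
  then show "besov_norm \<phi> \<psi> s p 1 (lacunary_sum w) =
     (\<Sum>\<^sub>\<infinity>k. \<bar>scoef \<phi> (lacunary_sum w) k\<bar> powr p) powr (1 / p) + (\<Sum>n. lacunary_energy s p w n)"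
    unfolding besov_norm_def \<open>(\<lambda>j. besov_eps \<psi> s p (lacunary_sum w) j powr 1) = _\<close>
      sums_unique[OF besov_eps_lacunary_sum_sums, symmetric] by simp
qed

end

end

lemma lacunary_sum_scale:
  assumes "summable (\<lambda>n. \<bar>w n\<bar>)"
  shows "lacunary_sum (\<lambda>n. c * w n) x = c * lacunary_sum w x"
  unfolding lacunary_sum_def
  using suminf_mult[OF summable_norm_cancel[OF summable_norm_lacunary_terms[OF assms]], of c x]
  by (simp add: mult.assoc)

lemma lacunary_energy_scale:
  "0 \<le> c \<Longrightarrow> lacunary_energy s p (\<lambda>n. c * w n) n = c * lacunary_energy s p w n"
  by (simp add: lacunary_energy_def abs_mult mult_ac)

lemma exists_normalised_lacunary_sum:
  assumes w: "summable (\<lambda>n. \<bar>w n\<bar>)" and p: "1 \<le> p" and energy: "summable (lacunary_energy s p w)"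
  shows "\<exists>\<epsilon>>0. besov \<phi> \<psi> s p 1 (lacunary_sum (\<lambda>n. \<epsilon> * w n)) \<and>
    besov_norm \<phi> \<psi> s p 1 (lacunary_sum (\<lambda>n. \<epsilon> * w n)) \<le> 1"
proof -
  define S where "S = (\<Sum>\<^sub>\<infinity>k. \<bar>scoef \<phi> (lacunary_sum w) k\<bar> powr p)"
  define E where "E = (\<Sum>n. lacunary_energy s p w n)"
  define \<epsilon> where "\<epsilon> = 1 / (1 + S powr (1 / p) + E)"
  have S0: "0 \<le> S" unfolding S_def by (intro infsum_nonneg) simp
  have E0: "0 \<le> E" unfolding E_def
    by (rule suminf_nonneg[OF energy]) (simp add: lacunary_energy_def)
  have \<epsilon>0: "0 < \<epsilon>" using E0 by (simp add: \<epsilon>_def add_pos_nonneg)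
  have p0: "0 < p" using p by simp
  define v where "v n = \<epsilon> * w n" for n
  have v: "summable (\<lambda>n. \<bar>v n\<bar>)" using summable_mult[OF w, of \<epsilon>] \<epsilon>0 by (simp add: v_def abs_mult)
  have energy_v: "lacunary_energy s p v = (\<lambda>n. \<epsilon> * lacunary_energy s p w n)"
    using \<epsilon>0 unfolding v_def[abs_def] by (intro ext lacunary_energy_scale) simp
  have summable_energy_v: "summable (lacunary_energy s p v)"
    unfolding energy_v by (rule summable_mult[OF energy])
  have "lacunary_sum v = (\<lambda>x. \<epsilon> * lacunary_sum w x)"
    unfolding v_def using lacunary_sum_scale[OF w] by (intro ext)
  then have "scoef \<phi> (lacunary_sum v) k = \<epsilon> * scoef \<phi> (lacunary_sum w) k" for k
    by (simp add: scoef_scale)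
  then have "(\<Sum>\<^sub>\<infinity>k. \<bar>scoef \<phi> (lacunary_sum v) k\<bar> powr p) = \<epsilon> powr p * S"
    using \<epsilon>0 by (simp add: S_def abs_mult powr_mult infsum_cmult_right')
  then have "(\<Sum>\<^sub>\<infinity>k. \<bar>scoef \<phi> (lacunary_sum v) k\<bar> powr p) powr (1 / p) = \<epsilon> * S powr (1 / p)"
    using \<epsilon>0 S0 p0 by (simp add: powr_mult powr_powr)
  moreover have "(\<Sum>n. lacunary_energy s p v n) = \<epsilon> * E"
    unfolding energy_v E_def by (rule suminf_mult[OF energy])
  ultimately have "besov_norm \<phi> \<psi> s p 1 (lacunary_sum v) = \<epsilon> * (S powr (1 / p) + E)"
    using besov_lacunary_sum(2)[OF v p summable_energy_v] by (simp add: algebra_simps)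
  also have "\<dots> = (S powr (1 / p) + E) / (1 + (S powr (1 / p) + E))" by (simp add: \<epsilon>_def add.assoc)
  also have "\<dots> \<le> 1"
  proof -
    have "0 \<le> S powr (1 / p) + E" using E0 by simp
    then show ?thesis by (simp add: divide_le_eq)
  qed
  finally show ?thesis
    using \<epsilon>0 besov_lacunary_sum(1)[OF v p summable_energy_v] unfolding v_def by blast
qed

lemma summable_lacunary_energy:
  assumes p: "0 < p"
    and card_P: "\<And>n. real (card (P n)) \<le> C * 2 powr (\<beta> * real (N * n))"
    and w: "\<And>n. \<bar>w n\<bar> \<le> D * 2 powr (- \<gamma> * real (N * n))"
    and \<gamma>: "s - real CARD('n) / p + \<beta> / p < \<gamma>"
  shows "summable (lacunary_energy s p w)"
proof -
  define \<delta> where "\<delta> = (\<gamma> - (s - real CARD('n) / p + \<beta> / p)) * real N"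
  have \<delta>: "0 < \<delta>" using \<gamma> N_pos by (simp add: \<delta>_def)
  have C0: "0 \<le> C" using card_P[of 0] by simp
  have "lacunary_energy s p w n \<le> C powr (1 / p) * D * 2 powr (- \<delta> * real n)" for n
  proof -
    define M where "M = real (N * n)"
    have "real (card (P n)) powr (1 / p) \<le> (C * 2 powr (\<beta> * M)) powr (1 / p)"
      using card_P[of n] p by (intro powr_mono2) (auto simp: M_def)
    also have "\<dots> = C powr (1 / p) * 2 powr (\<beta> * M / p)"
      using C0 by (simp add: powr_mult powr_powr)
    finally have card_le: "real (card (P n)) powr (1 / p) \<le> C powr (1 / p) * 2 powr (\<beta> * M / p)" .
    have "lacunary_energy s p w n
        \<le> 2 powr ((s - real CARD('n) / p) * M) * (C powr (1 / p) * 2 powr (\<beta> * M / p))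
          * (D * 2 powr (- \<gamma> * M))"
      unfolding lacunary_energy_def M_def[symmetric]
      using card_le w[of n] by (intro mult_mono mult_left_mono) (auto simp: M_def)
    also have "\<dots> = C powr (1 / p) * D
        * (2 powr ((s - real CARD('n) / p) * M) * 2 powr (\<beta> * M / p) * 2 powr (- \<gamma> * M))"
      by (simp add: mult_ac)
    also have "2 powr ((s - real CARD('n) / p) * M) * 2 powr (\<beta> * M / p) * 2 powr (- \<gamma> * M)
        = 2 powr ((s - real CARD('n) / p) * M + \<beta> * M / p + - \<gamma> * M)"
      by (simp only: powr_add)
    also have "\<dots> = 2 powr (- \<delta> * real n)"
      by (rule arg_cong[where f="\<lambda>e. 2 powr e"]) (simp add: \<delta>_def M_def algebra_simps)
    finally show ?thesis .
  qed
  moreover have "0 \<le> lacunary_energy s p w n" for n by (simp add: lacunary_energy_def)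
  ultimately show ?thesis
    by (intro summable_comparison_test'[OF summable_mult[OF summable_two_powr_neg[OF \<delta>]],
          where N=0])
       simp
qed

lemma Rop_lacunary_sum_ge_geometric:
  assumes w: "summable (\<lambda>n. \<bar>w n\<bar>)"
    and nonneg: "\<And>n. 0 \<le> w n * wavelet_block n x"
    and lower: "\<And>n. b * 2 powr (- \<gamma> * real (N * n)) \<le> w n * wavelet_block n x"
    and "0 \<le> b" "0 \<le> \<gamma>"
  shows "b * 2 powr (- \<gamma> * real N) * 2 powr (- \<gamma> * real j) \<le> Rop \<psi> (lacunary_sum w) j x"
proof -
  define n where "n = j div N + 1"
  have "N * (j div N) \<le> j" "j < N * (j div N) + N"
    using mult_div_mod_eq[of N j] mod_less_divisor[OF N_pos, of j] by linarith+
  then have "j \<le> N * n" "N * n \<le> j + N" by (simp_all add: n_def)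
  then have "real (N * n) \<le> real j + real N" by (metis of_nat_add of_nat_mono)
  have "b * 2 powr (- \<gamma> * real N) * 2 powr (- \<gamma> * real j) = b * 2 powr (- \<gamma> * (real j + real N))"
    by (simp add: powr_add[symmetric] algebra_simps)
  also have "\<dots> \<le> b * 2 powr (- \<gamma> * real (N * n))"
    using \<open>real (N * n) \<le> real j + real N\<close> assms(4,5)
    by (intro mult_left_mono) (auto intro: mult_left_mono)
  also have "\<dots> \<le> w n * wavelet_block n x" by (rule lower)
  also have "\<dots> \<le> Rop \<psi> (lacunary_sum w) j x"
    by (rule lacunary_term_le_Rop[OF w nonneg \<open>j \<le> N * n\<close>])
  finally show ?thesis .
qed

lemma liminf_log_Rop_lacunary_sum_ge:
  assumes "summable (\<lambda>n. \<bar>w n\<bar>)"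
    and "\<And>n. 0 \<le> w n * wavelet_block n x"
    and "\<And>n. b * 2 powr (- \<gamma> * real (N * n)) \<le> w n * wavelet_block n x"
    and "0 < b" "0 \<le> \<gamma>"
  shows "ereal (- \<gamma>) \<le> liminf (\<lambda>j. if Rop \<psi> (lacunary_sum w) j x = 0 then -\<infinity>
    else ereal (ln \<bar>Rop \<psi> (lacunary_sum w) j x\<bar> / (real j * ln 2)))"
  using assms
  by (intro liminf_log_rate_ge[where b="b * 2 powr (- \<gamma> * real N)"] Rop_lacunary_sum_ge_geometric)
     auto

lemma summable_geometric_weight: "0 < \<gamma> \<Longrightarrow> summable (\<lambda>n. \<bar>c * 2 powr (- \<gamma> * real (N * n))\<bar>)"
  using summable_mult[OF summable_two_powr_neg[of "\<gamma> * real N"], of "\<bar>c\<bar>"] N_pos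
  by (simp add: abs_mult mult_ac)

lemma exists_normalised_geometric_lacunary_sum:
  assumes p: "1 \<le> p"
    and card_P: "\<And>n. real (card (P n)) \<le> C * 2 powr (\<beta> * real (N * n))"
    and \<gamma>: "0 < \<gamma>" "s - real CARD('n) / p + \<beta> / p < \<gamma>"
  shows "\<exists>\<epsilon>>0. besov \<phi> \<psi> s p 1 (lacunary_sum (\<lambda>n. \<epsilon> * (c * 2 powr (- \<gamma> * real (N * n))))) \<and>
    besov_norm \<phi> \<psi> s p 1 (lacunary_sum (\<lambda>n. \<epsilon> * (c * 2 powr (- \<gamma> * real (N * n))))) \<le> 1"
proof (rule exists_normalised_lacunary_sum[OF summable_geometric_weight[OF \<gamma>(1)] p])
  show "summable (lacunary_energy s p (\<lambda>n. c * 2 powr (- \<gamma> * real (N * n))))"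
    using p
    by (intro summable_lacunary_energy[OF _ card_P _ \<gamma>(2), of _ "\<bar>c\<bar>"]) (auto simp: abs_mult)
qed

lemma exists_geometric_lacunary_sum_with_rate:
  fixes K G :: "(real^'n) set"
  assumes p: "1 \<le> p"
    and card_P: "\<And>n. real (card (P n)) \<le> C * 2 powr (\<beta> * real (N * n))"
    and \<gamma>: "0 < \<gamma>" "s - real CARD('n) / p + \<beta> / p < \<gamma>"
    and nonneg: "\<And>n x. x \<in> K \<Longrightarrow> 0 \<le> c * wavelet_block n x"
    and lower: "\<And>n x. x \<in> G \<Longrightarrow> 1 \<le> c * wavelet_block n x"
    and G: "G \<subseteq> K"
  shows "\<exists>f. besov \<phi> \<psi> s p 1 f \<and> besov_norm \<phi> \<psi> s p 1 f \<le> 1 \<and>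
    (\<forall>x\<in>K. convergent (\<lambda>j. Pop \<phi> \<psi> f j x)) \<and> (\<forall>x\<in>K. \<forall>j. 0 \<le> Rop \<psi> f j x) \<and>
    (\<forall>x\<in>G. ereal (- \<gamma>) \<le> liminf (\<lambda>j. if Rop \<psi> f j x = 0 then -\<infinity>
       else ereal (ln \<bar>Rop \<psi> f j x\<bar> / (real j * ln 2))))"
proof -
  obtain \<epsilon> where \<epsilon>: "0 < \<epsilon>"
    "besov \<phi> \<psi> s p 1 (lacunary_sum (\<lambda>n. \<epsilon> * (c * 2 powr (- \<gamma> * real (N * n)))))"
    "besov_norm \<phi> \<psi> s p 1 (lacunary_sum (\<lambda>n. \<epsilon> * (c * 2 powr (- \<gamma> * real (N * n))))) \<le> 1"
    using exists_normalised_geometric_lacunary_sum[OF p card_P \<gamma>] by blast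
  define v where "v = (\<lambda>n. \<epsilon> * (c * 2 powr (- \<gamma> * real (N * n))))"
  have v: "summable (\<lambda>n. \<bar>v n\<bar>)"
    using summable_geometric_weight[OF \<gamma>(1), of "\<epsilon> * c"] by (simp add: v_def mult.assoc)
  have v_block: "v n * wavelet_block n x = \<epsilon> * 2 powr (- \<gamma> * real (N * n)) * (c * wavelet_block n x)"
    for n x by (simp add: v_def)
  have v_nonneg: "0 \<le> v n * wavelet_block n x" if "x \<in> K" for n x
    unfolding v_block using nonneg[OF that] \<epsilon>(1) by simp
  have "\<epsilon> * 2 powr (- \<gamma> * real (N * n)) \<le> v n * wavelet_block n x" if "x \<in> G" for n x
    unfolding v_block
    using mult_left_mono[OF lower[OF that], of "\<epsilon> * 2 powr (- \<gamma> * real (N * n))"] \<epsilon>(1) by simp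
  then have "ereal (- \<gamma>) \<le> liminf (\<lambda>j. if Rop \<psi> (lacunary_sum v) j x = 0 then -\<infinity>
      else ereal (ln \<bar>Rop \<psi> (lacunary_sum v) j x\<bar> / (real j * ln 2)))" if "x \<in> G" for x
    using that v_nonneg G \<epsilon>(1) \<gamma>(1) by (intro liminf_log_Rop_lacunary_sum_ge[OF v]) auto
  then show ?thesis
    using \<epsilon>(2,3)[folded v_def] convergent_Pop_lacunary_sum[OF v] Rop_lacunary_sum_nonneg[OF v v_nonneg]
    by (intro exI[of _ "lacunary_sum v"]) simp
qed

end

section \<open>Adapted Cantor data\<close>

definition cantor_positions ::
  "nat \<Rightarrow> nat \<Rightarrow> (nat \<Rightarrow> (int^'n) set) \<Rightarrow> (nat \<Rightarrow> int^'n \<Rightarrow> int^'n) \<Rightarrow> (real^'n) set \<Rightarrow> nat \<Rightarrow> (int^'n) set"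
  where "cantor_positions t N \<Theta> \<mu> G n = \<mu> n ` {Q \<in> \<Theta> n. closed_cube (t + N * n) Q \<inter> G \<noteq> {}}"

context
  fixes \<psi> :: "nat \<Rightarrow> real^'n::finite \<Rightarrow> real" and d' a :: real and t N :: nat and K :: "(real^'n) set"
    and \<Theta> :: "nat \<Rightarrow> (int^'n) set" and \<mu> :: "nat \<Rightarrow> int^'n \<Rightarrow> int^'n"
  assumes cantor: "adapted_cantor_data \<psi> d' K t N a \<Theta> \<mu>"
begin

lemma cantor_compact: "compact K"
  using cantor unfolding adapted_cantor_data_def self_similar_OSC_def by blast

lemma cantor_N_pos: "0 < N"
  using cantor unfolding adapted_cantor_data_def by linarith

lemma cantor_subset_Kn: "x \<in> K \<Longrightarrow> x \<in> Kn t N \<Theta> n"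
  using cantor unfolding adapted_cantor_data_def by blast

lemma cantor_wavelet_ge_1:
  "x \<in> K \<Longrightarrow> Q \<in> \<Theta> n \<Longrightarrow> x \<in> closed_cube (t + N * n) Q \<Longrightarrow> 1 \<le> a * dil (\<psi> 1) (int (N * n)) (\<mu> n Q) x"
  using cantor cantor_subset_Kn unfolding adapted_cantor_data_def by blast

lemma cantor_wavelet_eq_0:
  "x \<in> K \<Longrightarrow> Q \<in> \<Theta> n \<Longrightarrow> x \<notin> closed_cube (t + N * n) Q \<Longrightarrow> dil (\<psi> 1) (int (N * n)) (\<mu> n Q) x = 0"
  using cantor cantor_subset_Kn unfolding adapted_cantor_data_def by blast

lemma finite_cantor_Theta: "finite (\<Theta> n)"
  using cantor unfolding adapted_cantor_data_def by blast

lemma cantor_wavelet_nonneg: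
  assumes "x \<in> K" "Q \<in> \<Theta> n"
  shows "0 \<le> a * dil (\<psi> 1) (int (N * n)) (\<mu> n Q) x"
proof (cases "x \<in> closed_cube (t + N * n) Q")
  case True
  then show ?thesis using cantor_wavelet_ge_1[OF assms] by linarith
next
  case False
  then show ?thesis using cantor_wavelet_eq_0[OF assms] by simp
qed

lemma cantor_sum_nonneg:
  assumes "x \<in> K"
  shows "0 \<le> a * (\<Sum>k\<in>cantor_positions t N \<Theta> \<mu> G n. dil (\<psi> 1) (int (N * n)) k x)"
  unfolding sum_distrib_left
proof (rule sum_nonneg)
  fix k assume "k \<in> cantor_positions t N \<Theta> \<mu> G n"
  then obtain Q where "Q \<in> \<Theta> n" "k = \<mu> n Q" unfolding cantor_positions_def by blast
  then show "0 \<le> a * dil (\<psi> 1) (int (N * n)) k x" using cantor_wavelet_nonneg[OF assms] by blast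
qed

context
  fixes G :: "(real^'n) set"
  assumes G: "G \<subseteq> K"
begin

lemma finite_cantor_positions: "finite (cantor_positions t N \<Theta> \<mu> G n)"
  unfolding cantor_positions_def using finite_cantor_Theta by simp

lemma card_cantor_positions_le:
  "card (cantor_positions t N \<Theta> \<mu> G n) \<le> card {k. closed_cube (t + N * n) k \<inter> G \<noteq> {}}"
proof -
  have "bounded G" using G compact_imp_bounded[OF cantor_compact] bounded_subset by blast
  have "card (cantor_positions t N \<Theta> \<mu> G n) \<le> card {Q \<in> \<Theta> n. closed_cube (t + N * n) Q \<inter> G \<noteq> {}}"
    unfolding cantor_positions_def using finite_cantor_Theta by (intro card_image_le) simp
  also have "\<dots> \<le> card {k. closed_cube (t + N * n) k \<inter> G \<noteq> {}}"
    by (rule card_mono[OF finite_cubes_meeting[OF \<open>bounded G\<close>]]) blast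
  finally show ?thesis .
qed

lemma cantor_sum_ge_1:
  assumes "x \<in> G"
  shows "1 \<le> a * (\<Sum>k\<in>cantor_positions t N \<Theta> \<mu> G n. dil (\<psi> 1) (int (N * n)) k x)"
proof -
  have "x \<in> K" using assms G by blast
  then obtain Q where Q: "Q \<in> \<Theta> n" "x \<in> closed_cube (t + N * n) Q"
    using cantor_subset_Kn unfolding Kn_def by blast
  then have "\<mu> n Q \<in> cantor_positions t N \<Theta> \<mu> G n"
    using assms unfolding cantor_positions_def by blast
  have "1 \<le> a * dil (\<psi> 1) (int (N * n)) (\<mu> n Q) x" by (rule cantor_wavelet_ge_1[OF \<open>x \<in> K\<close> Q])
  also have "\<dots> \<le> (\<Sum>k\<in>cantor_positions t N \<Theta> \<mu> G n. a * dil (\<psi> 1) (int (N * n)) k x)"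
  proof (rule member_le_sum[OF \<open>\<mu> n Q \<in> cantor_positions t N \<Theta> \<mu> G n\<close> _ finite_cantor_positions])
    fix k assume "k \<in> cantor_positions t N \<Theta> \<mu> G n - {\<mu> n Q}"
    then obtain Q' where "Q' \<in> \<Theta> n" "k = \<mu> n Q'" unfolding cantor_positions_def by blast
    then show "0 \<le> a * dil (\<psi> 1) (int (N * n)) k x" using cantor_wavelet_nonneg[OF \<open>x \<in> K\<close>] by blast
  qed
  finally show ?thesis by (simp add: sum_distrib_left)
qed

lemma cantor_positions_support:
  assumes "compactly_supported (\<psi> 1)"
  shows "\<exists>R. \<forall>n k x. k \<in> cantor_positions t N \<Theta> \<mu> G n \<longrightarrow>
    dil (\<psi> 1) (int (N * n)) k x \<noteq> 0 \<longrightarrow> norm x \<le> R"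
proof -
  obtain R1 where R1: "\<And>x. norm x > R1 \<Longrightarrow> \<psi> 1 x = 0"
    using assms unfolding compactly_supported_def by blast
  obtain RK where RK: "\<And>z. z \<in> K \<Longrightarrow> norm z \<le> RK"
    using compact_imp_bounded[OF cantor_compact] unfolding bounded_iff by blast
  have "norm x \<le> RK + 2 * R1"
    if "k \<in> cantor_positions t N \<Theta> \<mu> G n" "dil (\<psi> 1) (int (N * n)) k x \<noteq> 0" for n k x
  proof -
    have "k \<in> \<mu> n ` {Q \<in> \<Theta> n. closed_cube (t + N * n) Q \<inter> G \<noteq> {}}"
      using that(1) by (simp add: cantor_positions_def)
    then obtain Q z where Q: "Q \<in> \<Theta> n" "k = \<mu> n Q" and z: "z \<in> closed_cube (t + N * n) Q" "z \<in> G"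
      by blast
    have "z \<in> K" using z(2) G by blast
    then have "dil (\<psi> 1) (int (N * n)) k z \<noteq> 0"
      using cantor_wavelet_ge_1[OF _ Q(1) z(1)] Q(2) by force
    then have "dist x z \<le> 2 * R1"
      using dil_nonzero_imp_dist_le[of R1 "\<psi> 1" "N * n" k x z] R1 that(2) by blast
    then show ?thesis using RK[OF \<open>z \<in> K\<close>] norm_triangle_sub[of x z] by (simp add: dist_norm)
  qed
  then show ?thesis by blast
qed

lemma card_cantor_positions_le_powr:
  assumes "upper_box_dim G < ereal \<beta>"
  shows "\<exists>C. \<forall>n. real (card (cantor_positions t N \<Theta> \<mu> G n)) \<le> C * 2 powr (\<beta> * real (N * n))"
proof -
  have "bounded G" using G compact_imp_bounded[OF cantor_compact] bounded_subset by blast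
  then obtain C where C: "\<And>j. real (card {k. closed_cube j k \<inter> G \<noteq> {}}) \<le> C * 2 powr (\<beta> * real j)"
    using card_cubes_meeting_le_powr[OF _ assms] by blast
  have "real (card (cantor_positions t N \<Theta> \<mu> G n))
      \<le> C * 2 powr (\<beta> * real t) * 2 powr (\<beta> * real (N * n))" for n
  proof -
    have "real (card (cantor_positions t N \<Theta> \<mu> G n))
        \<le> real (card {k. closed_cube (t + N * n) k \<inter> G \<noteq> {}})"
      by (rule of_nat_mono[OF card_cantor_positions_le])
    also have "\<dots> \<le> C * 2 powr (\<beta> * real (t + N * n))" by (rule C)
    also have "\<dots> = C * 2 powr (\<beta> * real t) * 2 powr (\<beta> * real (N * n))"
      by (simp add: distrib_left powr_add)
    finally show ?thesis .
  qed
  then show ?thesis by blast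
qed

end

end

lemma wavelet_setup_continuous:
  fixes \<psi> :: "nat \<Rightarrow> real^'n \<Rightarrow> real"
  shows "wavelet_setup s \<phi> \<psi> \<Longrightarrow> i \<in> wav_idx TYPE('n) \<Longrightarrow> continuous_on UNIV (\<psi> i)"
  unfolding wavelet_setup_def by (auto intro: differentiable_imp_continuous_on)

lemma lacunary_wavelet_series_cantor:
  fixes \<phi> :: "real^'n \<Rightarrow> real" and \<psi> :: "nat \<Rightarrow> real^'n \<Rightarrow> real"
  assumes wsetup: "wavelet_setup s \<phi> \<psi>"
    and supp: "compactly_supported \<phi>" "\<forall>i\<in>wav_idx TYPE('n). compactly_supported (\<psi> i)"
    and cantor: "adapted_cantor_data \<psi> d' K t N a \<Theta> \<mu>" and G: "G \<subseteq> K"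
  shows "\<exists>R. lacunary_wavelet_series \<phi> \<psi> N (cantor_positions t N \<Theta> \<mu> G) R"
proof -
  obtain R where "\<forall>n k x. k \<in> cantor_positions t N \<Theta> \<mu> G n \<longrightarrow>
      dil (\<psi> 1) (int (N * n)) k x \<noteq> 0 \<longrightarrow> norm x \<le> R"
    using cantor_positions_support[OF cantor G] supp(2) one_in_wav_idx by blast
  then have "lacunary_wavelet_series \<phi> \<psi> N (cantor_positions t N \<Theta> \<mu> G) R"
    using wsetup supp cantor_N_pos[OF cantor] finite_cantor_positions[OF cantor G]
    by unfold_locales (auto simp: wavelet_setup_def intro: wavelet_setup_continuous[OF wsetup])
  then show ?thesis ..
qed

theorem theorem4p7:
  fixes \<phi> :: "real^'n \<Rightarrow> real" and \<psi> :: "nat \<Rightarrow> real^'n \<Rightarrow> real"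
    and s p d' \<alpha> a :: real and t N :: nat
    and K G :: "(real^'n) set"
    and \<Theta> :: "nat \<Rightarrow> (int^'n) set" and \<mu> :: "nat \<Rightarrow> int^'n \<Rightarrow> int^'n"
  assumes wsetup: "wavelet_setup s \<phi> \<psi>"
    and supp: "compactly_supported \<phi>" "\<forall>i\<in>wav_idx TYPE('n). compactly_supported (\<psi> i)"
    and s: "0 \<le> s" and p: "1 \<le> p"
    and d': "0 < d'" "d' < real CARD('n)"
    and cantor: "adapted_cantor_data \<psi> d' K t N a \<Theta> \<mu>"
    and \<alpha>: "max 0 (real CARD('n) - s * p) < \<alpha>" "\<alpha> < d'"
    and G: "G \<subseteq> K" "upper_box_dim G < ereal \<alpha>"
  shows "\<exists>f. besov \<phi> \<psi> s p 1 f \<and> besov_norm \<phi> \<psi> s p 1 f \<le> 1 \<and>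
    (\<forall>x\<in>K. convergent (\<lambda>j. Pop \<phi> \<psi> f j x)) \<and>
    (\<forall>x\<in>K. \<forall>j. Rop \<psi> f j x \<ge> 0) \<and>
    (\<forall>x\<in>G. liminf (\<lambda>j. if Rop \<psi> f j x = 0 then -\<infinity>
               else ereal (ln \<bar>Rop \<psi> f j x\<bar> / (real j * ln 2)))
           \<ge> ereal ((real CARD('n) - s * p - \<alpha>) / p))"
proof -
  define P where "P = cantor_positions t N \<Theta> \<mu> G"
  obtain \<beta> where \<beta>: "upper_box_dim G < ereal \<beta>" "\<beta> < \<alpha>"
    using G(2) by (metis ereal_dense2 ereal_less(2) less_ereal.simps(1))
  obtain R where "lacunary_wavelet_series \<phi> \<psi> N P R"
    using lacunary_wavelet_series_cantor[OF wsetup supp cantor G(1)] unfolding P_def by blast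
  then interpret L: lacunary_wavelet_series \<phi> \<psi> N P R .
  obtain C where C: "\<And>n. real (card (P n)) \<le> C * 2 powr (\<beta> * real (N * n))"
    using card_cantor_positions_le_powr[OF cantor G(1) \<beta>(1)] unfolding P_def by blast
  define \<gamma> where "\<gamma> = (s * p + \<alpha> - real CARD('n)) / p"
  have \<gamma>: "0 < \<gamma>" "s - real CARD('n) / p + \<beta> / p < \<gamma>"
    using \<alpha> \<beta>(2) p by (auto simp: \<gamma>_def field_simps)
  have "- \<gamma> = (real CARD('n) - s * p - \<alpha>) / p" unfolding \<gamma>_def by (simp add: minus_divide_left)
  moreover have "\<exists>f. besov \<phi> \<psi> s p 1 f \<and> besov_norm \<phi> \<psi> s p 1 f \<le> 1 \<and>
    (\<forall>x\<in>K. convergent (\<lambda>j. Pop \<phi> \<psi> f j x)) \<and> (\<forall>x\<in>K. \<forall>j. 0 \<le> Rop \<psi> f j x) \<and>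
    (\<forall>x\<in>G. ereal (- \<gamma>) \<le> liminf (\<lambda>j. if Rop \<psi> f j x = 0 then -\<infinity>
       else ereal (ln \<bar>Rop \<psi> f j x\<bar> / (real j * ln 2))))"
    using cantor_sum_nonneg[OF cantor, where G=G, folded P_def]
      cantor_sum_ge_1[OF cantor G(1), folded P_def] G(1)
    by (intro L.exists_geometric_lacunary_sum_with_rate[OF p C \<gamma>, where c=a])
       (auto simp: L.wavelet_block_def)
  ultimately show ?thesis by simp
qed

end
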